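(* Let $0<q<1$, and consider the spin representation $\pi$ of $\mathcal{A}(S^2_q)$ on $\mathcal{H}=\hat{\mathcal{H}}\otimes\mathbb{C}^2$ with $D=|D|\otimes F$, grading $\gamma$ and $F=\begin{pmatrix}0&1\\1&0\end{pmatrix}$ (identifying $F$ with $\mathrm{id}\otimes F$). Then: (i) for every $x_0\in\mathcal{A}(S^2_q)$, the function $\psi(s)=\mathrm{Trace}(\gamma\pi(x_0)|D|^{-2s})$ (defined for $\mathrm{Re}\,s>1$) extends to an entire function, and $\mathrm{Res}_{s=0}s^{-1}\psi(s)=\psi(0)=\tfrac12\mathrm{Trace}(\gamma F[F,\pi(x_0)])$; (ii) for all $x_0,x_1,x_2\in\mathcal{A}(S^2_q)$, $\mathrm{Res}_{s=0}\mathrm{Trace}\bigl(\gamma\pi(x_0)[D,\pi(x_1)][D,\pi(x_2)]|D|^{-2(s+1)}\bigr)=0$. That is, the components $\varphi_0,\varphi_2$ of the Connes–Moscovici local cocycle satisfy $\varphi_0=\mathrm{ch}^F_0$ (where $\mathrm{ch}^F_0(x)=\tfrac12\mathrm{Trace}(\gamma F[F,\pi(x)])$) and $\varphi_2\equiv0$.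
   Context: $\mathcal{A}(S^2_q)$ is the unital $*$-algebra generated by $a,a^*$ and $b=b^*$ with $ba=q^2ab$, $a^*a+b^2=1$, $q^4aa^*+b^2=q^4$. $\hat{\mathcal{H}}$ has orthonormal basis $|l,m\rangle$, $l\in\mathbb{N}+\tfrac12$, $m=-l,\dots,l$ (out-of-range vectors are $0$), $|D|\,|l,m\rangle=(l+\tfrac12)|l,m\rangle$, and $\gamma=\begin{pmatrix}1&0\\0&-1\end{pmatrix}$ on $\mathbb{C}^2$ (acting as $\mathrm{id}\otimes\gamma$). With $[x]=(q^x-q^{-x})/(q-q^{-1})$, representations $\pi_\pm$ on $\hat{\mathcal{H}}$ are $\pi_\pm(a)|l,m\rangle=q^{m-l-\frac12}\frac{\sqrt{[l+m+1][l+m+2]}}{[2l+2]}|l+1,m+1\rangle-q^{m+l+\frac12}\frac{\sqrt{[l-m-1][l-m]}}{[2l]}|l-1,m+1\rangle\pm\frac{(1+q^2)q^{m-\frac12}}{[2l][2l+2]}\sqrt{[l+m+1][l-m]}\,|l,m+1\rangle$, $\pi_\pm(b)|l,m\rangle=-q^{m+1}\frac{\sqrt{[l+m+1][l-m+1]}}{[2l+2]}|l+1,m\rangle-q^{m+1}\frac{\sqrt{[l+m][l-m]}}{[2l]}|l-1,m\rangle\pm\frac{[l-m+1][l+m]-q^2[l-m][l+m+1]}{[2l][2l+2]}|l,m\rangle$, and $\pi=\pi_+\oplus\pi_-=\rho_+\otimes\mathrm{id}_{\mathbb{C}^2}+\rho_-\otimes\gamma$ with $\rho_\pm=(\pi_+\pm\pi_-)/2$.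 The function in (ii) is defined for $\mathrm{Re}\,s$ large and extends meromorphically to $\mathbb{C}$. *)

theory Defs
  imports "HOL-Complex_Analysis.Complex_Analysis"
begin

text \<open>A basis vector |l,m> \<otimes> e of H is indexed by ((l,m),e) with l \<in> N + 1/2,
  m \<in> {-l,...,l}, and e = True / False the first / second basis vector of C^2
  (the +1 / -1 eigenvectors of the grading gamma).\<close>

type_synonym idx = "(real \<times> real) \<times> bool"
type_synonym vec = "idx \<Rightarrow> complex"
type_synonym op = "vec \<Rightarrow> vec"

definition basis_idx :: "idx set" where
  "basis_idx = {((real n + 1/2, real j - (real n + 1/2)), e) | n j e. j \<le> 2 * n + 1}"

definition qnum :: "real \<Rightarrow> real \<Rightarrow> real" where
  "qnum q x = (q powr x - q powr (-x)) / (q - 1 / q)"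

text \<open>Matrix coefficient <l',m'| pi_sigma(a) |l,m>, sigma = +1 or -1.\<close>
definition ent_a :: "real \<Rightarrow> real \<Rightarrow> real \<times> real \<Rightarrow> real \<times> real \<Rightarrow> real" where
  "ent_a q \<sigma> lm' lm = (case lm' of (l', m') \<Rightarrow> case lm of (l, m) \<Rightarrow>
     (if l' = l + 1 \<and> m' = m + 1 then
        q powr (m - l - 1/2) * sqrt (qnum q (l + m + 1) * qnum q (l + m + 2)) / qnum q (2 * l + 2)
      else 0)
   + (if l' = l - 1 \<and> m' = m + 1 then
        - (q powr (m + l + 1/2) * sqrt (qnum q (l - m - 1) * qnum q (l - m)) / qnum q (2 * l))
      else 0)
   + (if l' = l \<and> m' = m + 1 then
        \<sigma> * (1 + q\<^sup>2) * q powr (m - 1/2) / (qnum q (2 * l) * qnum q (2 * l + 2))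
          * sqrt (qnum q (l + m + 1) * qnum q (l - m))
      else 0))"

definition ent_b :: "real \<Rightarrow> real \<Rightarrow> real \<times> real \<Rightarrow> real \<times> real \<Rightarrow> real" where
  "ent_b q \<sigma> lm' lm = (case lm' of (l', m') \<Rightarrow> case lm of (l, m) \<Rightarrow>
     (if l' = l + 1 \<and> m' = m then
        - (q powr (m + 1) * sqrt (qnum q (l + m + 1) * qnum q (l - m + 1)) / qnum q (2 * l + 2))
      else 0)
   + (if l' = l - 1 \<and> m' = m then
        - (q powr (m + 1) * sqrt (qnum q (l + m) * qnum q (l - m)) / qnum q (2 * l))
      else 0)
   + (if l' = l \<and> m' = m then
        \<sigma> * (qnum q (l - m + 1) * qnum q (l + m) - q\<^sup>2 * qnum q (l - m) * qnum q (l + m + 1))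
          / (qnum q (2 * l) * qnum q (2 * l + 2))
      else 0))"

text \<open>Operator on H given by a matrix (acting on finitely supported vectors;
  out-of-range basis vectors are 0).\<close>
definition mop :: "(idx \<Rightarrow> idx \<Rightarrow> complex) \<Rightarrow> op" where
  "mop M v = (\<lambda>i. if i \<in> basis_idx then (\<Sum>j\<in>{j\<in>basis_idx. v j \<noteq> 0}. M i j * v j) else 0)"

text \<open>pi = pi_+ \<oplus> pi_- : pi_+ acts on the e = True component, pi_- on e = False
  (this is rho_+ \<otimes> id + rho_- \<otimes> gamma).\<close>
definition sgn_of :: "bool \<Rightarrow> real" where
  "sgn_of e = (if e then 1 else -1)"

definition pi_a :: "real \<Rightarrow> op" where
  "pi_a q = mop (\<lambda>i' i. if snd i' = snd i then complex_of_real (ent_a q (sgn_of (snd i)) (fst i') (fst i)) else 0)"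

text \<open>pi(a^*) = pi(a)^* : the (real) matrix transposed.\<close>
definition pi_as :: "real \<Rightarrow> op" where
  "pi_as q = mop (\<lambda>i' i. if snd i' = snd i then complex_of_real (ent_a q (sgn_of (snd i)) (fst i) (fst i')) else 0)"

definition pi_b :: "real \<Rightarrow> op" where
  "pi_b q = mop (\<lambda>i' i. if snd i' = snd i then complex_of_real (ent_b q (sgn_of (snd i)) (fst i') (fst i)) else 0)"

definition id_op :: op where
  "id_op = mop (\<lambda>i' i. if i' = i then 1 else 0)"

inductive_set pi_alg :: "real \<Rightarrow> op set" for q :: real where
  unit: "id_op \<in> pi_alg q"
| gen_a: "pi_a q \<in> pi_alg q"
| gen_as: "pi_as q \<in> pi_alg q"
| gen_b: "pi_b q \<in> pi_alg q"
| add: "S \<in> pi_alg q \<Longrightarrow> T \<in> pi_alg q \<Longrightarrow> (\<lambda>v i. S v i + T v i) \<in> pi_alg q"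
| smult: "T \<in> pi_alg q \<Longrightarrow> (\<lambda>v i. c * T v i) \<in> pi_alg q"
| mult: "S \<in> pi_alg q \<Longrightarrow> T \<in> pi_alg q \<Longrightarrow> S \<circ> T \<in> pi_alg q"

definition gamma_op :: op where
  "gamma_op v = (\<lambda>i. if i \<in> basis_idx then complex_of_real (sgn_of (snd i)) * v i else 0)"

definition F_op :: op where
  "F_op v = (\<lambda>i. if i \<in> basis_idx then v (fst i, \<not> snd i) else 0)"

definition D_op :: op where
  "D_op v = (\<lambda>i. if i \<in> basis_idx then complex_of_real (fst (fst i) + 1/2) * v (fst i, \<not> snd i) else 0)"

definition absD_pow :: "complex \<Rightarrow> op" where
  "absD_pow z v = (\<lambda>i. if i \<in> basis_idx then complex_of_real (fst (fst i) + 1/2) powr z * v i else 0)"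

definition commut :: "op \<Rightarrow> op \<Rightarrow> op" where
  "commut S T = (\<lambda>v i. (S \<circ> T) v i - (T \<circ> S) v i)"

text \<open>Diagonal matrix entry <i| T |i>; Trace T is the (absolutely convergent)
  sum of these over the orthonormal basis.\<close>
definition diag_ent :: "op \<Rightarrow> idx \<Rightarrow> complex" where
  "diag_ent T i = T (\<lambda>j. if j = i then 1 else 0) i"

end

theory Submission
  imports Defs "HOL-Real_Asymp.Real_Asymp"
begin

(* The grading separates the two summands pi_+ and pi_- of pi, and in the basis |l,m> the
   matrices of pi_+(x) and pi_-(x) agree up to O(l^k q^l): for the generators only the
   sigma-dependent summands differ, and these carry a factor q^l.  This survives sums and
   products because all operators involved are band matrices with polynomially bounded
   entries, and D, which is diagonal in l, of order one and swaps the two summands, preserves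
   it as well.  Hence Trace(gamma T |D|^(-2s)), summed over the pairs of basis vectors
   exchanged by F, is a series whose coefficients decay like q^l; it converges locally
   uniformly on all of C, so it is entire, and at s = 0 the coefficient of each pair is half
   of its contribution to the trace of gamma F [F, T].  For T = pi(x0) [D, pi(x1)] [D, pi(x2)]
   the function is again entire, so its residue at 0 vanishes. *)

section \<open>Estimates for \<open>q\<close>-numbers\<close>

locale q_param =
  fixes q :: real
  assumes q_pos: "0 < q" and q_lt_1: "q < 1"
begin

lemma one_minus_q2_pos: "0 < 1 - q\<^sup>2"
  using q_pos q_lt_1 by (simp add: abs_square_less_1)

lemma q_powr_antimono: "d \<le> c \<Longrightarrow> q powr c \<le> q powr d"
  using powr_mono'[of d c q] q_pos q_lt_1 by simp

lemma q_powr_le_1: "0 \<le> c \<Longrightarrow> q powr c \<le> 1"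
  using q_powr_antimono[of 0 c] q_pos by simp

lemma qnum_eq: "qnum q x = (q powr (-x) - q powr x) * q / (1 - q\<^sup>2)"
proof -
  have "q - 1/q = - (1 - q\<^sup>2) / q" using q_pos by (simp add: field_simps power2_eq_square)
  then show ?thesis unfolding qnum_def using q_pos one_minus_q2_pos by (simp add: field_simps)
qed

lemma qnum_nonneg: "0 \<le> x \<Longrightarrow> 0 \<le> qnum q x"
  unfolding qnum_eq using q_pos q_lt_1 one_minus_q2_pos
  by (intro divide_nonneg_pos mult_nonneg_nonneg) (auto intro!: powr_mono')

lemma qnum_le: "qnum q x \<le> q powr (1 - x) / (1 - q\<^sup>2)"
proof -
  have "(q powr (-x) - q powr x) * q \<le> q powr (-x) * q" using q_pos by simp
  also have "\<dots> = q powr (1 - x)" using q_pos powr_add[of q "-x" 1] by simp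
  finally show ?thesis unfolding qnum_eq using one_minus_q2_pos by (simp add: divide_right_mono)
qed

lemma qnum_ge: "1 \<le> x \<Longrightarrow> q powr (1 - x) \<le> qnum q x"
proof -
  assume x: "1 \<le> x"
  have "q powr (1 + x) \<le> q powr (3 - x)" using x by (intro q_powr_antimono) auto
  moreover have "q powr (1 - x) * q\<^sup>2 = q powr (3 - x)"
    using q_pos powr_add[of q "1 - x" 2] by (simp add: powr_numeral)
  ultimately have "q powr (1 - x) * (1 - q\<^sup>2) \<le> (q powr (-x) - q powr x) * q"
    using q_pos powr_add[of q 1 x] powr_add[of q "-x" 1] by (simp add: algebra_simps)
  then show ?thesis unfolding qnum_eq using one_minus_q2_pos by (simp add: field_simps)
qed

lemma qnum_pos: "1 \<le> x \<Longrightarrow> 0 < qnum q x"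
  using qnum_ge[of x] q_pos by (smt (verit) powr_gt_zero)

lemma inverse_qnum_le: "1 \<le> x \<Longrightarrow> 1 / qnum q x \<le> q powr (x - 1)"
proof -
  assume x: "1 \<le> x"
  have "1 / qnum q x \<le> 1 / q powr (1 - x)"
    using qnum_ge[OF x] qnum_pos[OF x] q_pos by (intro divide_left_mono) auto
  also have "\<dots> = q powr (x - 1)" using q_pos by (simp add: powr_minus_divide[symmetric])
  finally show ?thesis .
qed

lemma qnum_mult_le:
  "0 \<le> x \<Longrightarrow> 0 \<le> y \<Longrightarrow> qnum q x * qnum q y \<le> q powr (2 - x - y) / (1 - q\<^sup>2)\<^sup>2"
proof -
  assume x: "0 \<le> x" and y: "0 \<le> y"
  have "qnum q x * qnum q y \<le> (q powr (1 - x) / (1 - q\<^sup>2)) * (q powr (1 - y) / (1 - q\<^sup>2))"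
    using qnum_le[of x] qnum_le[of y] qnum_nonneg[OF x] qnum_nonneg[OF y]
    by (intro mult_mono) auto
  also have "\<dots> = q powr ((1 - x) + (1 - y)) / (1 - q\<^sup>2)\<^sup>2"
    unfolding powr_add by (simp add: power2_eq_square)
  finally show ?thesis by (simp add: algebra_simps)
qed

lemma sqrt_qnum_mult_le:
  "0 \<le> x \<Longrightarrow> 0 \<le> y \<Longrightarrow> sqrt (qnum q x * qnum q y) \<le> q powr (1 - (x + y) / 2) / (1 - q\<^sup>2)"
proof -
  assume "0 \<le> x" "0 \<le> y"
  then have "sqrt (qnum q x * qnum q y) \<le> sqrt (q powr (2 - x - y) / (1 - q\<^sup>2)\<^sup>2)"
    by (intro real_sqrt_le_mono qnum_mult_le)
  also have "\<dots> = q powr ((2 - x - y) / 2) / (1 - q\<^sup>2)"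
    using q_pos one_minus_q2_pos by (simp add: real_sqrt_divide powr_half_sqrt_powr)
  finally show ?thesis by (simp add: diff_divide_distrib add_divide_distrib diff_diff_eq)
qed

lemma q_powr_mult_le:
  assumes "0 \<le> S" "S \<le> q powr a / (1 - q\<^sup>2)" "0 \<le> I" "I \<le> q powr b" "0 \<le> J" "J \<le> q powr c"
  shows "q powr e * S * I * J \<le> q powr (e + a + b + c) / (1 - q\<^sup>2)"
proof -
  have "q powr e * S * I * J \<le> q powr e * (q powr a / (1 - q\<^sup>2)) * q powr b * q powr c"
    using assms by (intro mult_mono mult_nonneg_nonneg) auto
  also have "\<dots> = q powr (e + a + b + c) / (1 - q\<^sup>2)"
    by (simp add: powr_add)
  finally show ?thesis .
qed

end

section \<open>Matrix coefficients of the generators\<close>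

context q_param
begin

lemma ent_a_summand_bounds:
  assumes l: "1/2 \<le> l" and m: "-l \<le> m" "m \<le> l" "m = l \<or> m \<le> l - 1"
  defines "up \<equiv> q powr (m - l - 1/2) * sqrt (qnum q (l + m + 1) * qnum q (l + m + 2)) / qnum q (2 * l + 2)"
    and "down \<equiv> q powr (m + l + 1/2) * sqrt (qnum q (l - m - 1) * qnum q (l - m)) / qnum q (2 * l)"
    and "mid \<equiv> q powr (m - 1/2) * sqrt (qnum q (l + m + 1) * qnum q (l - m))
                  * (1 / qnum q (2 * l)) * (1 / qnum q (2 * l + 2))"
  shows "0 \<le> up" "up \<le> 1 / (1 - q\<^sup>2)" "0 \<le> down" "down \<le> 1 / (1 - q\<^sup>2)"
    "0 \<le> mid" "mid \<le> q powr l / (1 - q\<^sup>2)"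
proof -
  have Q: "0 < qnum q (2*l)" "0 < qnum q (2*l+2)" using qnum_pos l by auto
  show "0 \<le> up" unfolding up_def using Q qnum_nonneg m by (auto intro!: mult_nonneg_nonneg divide_nonneg_pos)
  show "0 \<le> mid" unfolding mid_def using Q qnum_nonneg m by (auto intro!: mult_nonneg_nonneg)
  have "up = q powr (m - l - 1/2) * sqrt (qnum q (l + m + 1) * qnum q (l + m + 2))
      * (1 / qnum q (2 * l + 2)) * 1"
    unfolding up_def by simp
  also have "\<dots> \<le> q powr ((m - l - 1/2) + (1 - ((l + m + 1) + (l + m + 2)) / 2) + (2 * l + 2 - 1) + 0)
      / (1 - q\<^sup>2)"
    using sqrt_qnum_mult_le[of "l+m+1" "l+m+2"] qnum_nonneg[of "l+m+1"] qnum_nonneg[of "l+m+2"]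
      inverse_qnum_le[of "2*l+2"] Q m l
    by (intro q_powr_mult_le) auto
  also have "\<dots> = 1 / (1 - q\<^sup>2)" using q_pos by (simp add: field_simps)
  finally show "up \<le> 1 / (1 - q\<^sup>2)" .
  have "0 \<le> down \<and> down \<le> 1 / (1 - q\<^sup>2)"
    using m(3)
  proof
    assume "m = l"
    then show ?thesis unfolding down_def using one_minus_q2_pos by (simp add: qnum_def)
  next
    assume m': "m \<le> l - 1"
    have "down = q powr (m + l + 1/2) * sqrt (qnum q (l - m - 1) * qnum q (l - m)) * (1 / qnum q (2 * l)) * 1"
      unfolding down_def by simp
    also have "\<dots> \<le> q powr ((m + l + 1/2) + (1 - ((l - m - 1) + (l - m)) / 2) + (2 * l - 1) + 0) / (1 - q\<^sup>2)"
      using sqrt_qnum_mult_le[of "l-m-1" "l-m"] qnum_nonneg[of "l-m-1"] qnum_nonneg[of "l-m"]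
        inverse_qnum_le[of "2*l"] Q m' l
      by (intro q_powr_mult_le) auto
    also have "\<dots> = q powr (2 * m + 2 * l + 1) / (1 - q\<^sup>2)"
      by (rule arg_cong[where f="\<lambda>t. q powr t / (1 - q\<^sup>2)"]) (simp add: field_simps)
    also have "\<dots> \<le> 1 / (1 - q\<^sup>2)"
      using q_powr_le_1[of "2 * m + 2 * l + 1"] m one_minus_q2_pos by (intro divide_right_mono) auto
    finally show ?thesis
      unfolding down_def using m' Q qnum_nonneg by (auto intro!: mult_nonneg_nonneg divide_nonneg_pos)
  qed
  then show "0 \<le> down" "down \<le> 1 / (1 - q\<^sup>2)" by auto
  have "mid \<le> q powr ((m - 1/2) + (1 - ((l + m + 1) + (l - m)) / 2) + (2 * l - 1) + (2 * l + 2 - 1))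
      / (1 - q\<^sup>2)"
    unfolding mid_def
    using sqrt_qnum_mult_le[of "l+m+1" "l-m"] qnum_nonneg[of "l+m+1"] qnum_nonneg[of "l-m"]
      inverse_qnum_le[of "2*l"] inverse_qnum_le[of "2*l+2"] Q m l
    by (intro q_powr_mult_le) auto
  also have "\<dots> = q powr (m + 3 * l) / (1 - q\<^sup>2)"
    by (rule arg_cong[where f="\<lambda>t. q powr t / (1 - q\<^sup>2)"]) (simp add: field_simps)
  also have "\<dots> \<le> q powr l / (1 - q\<^sup>2)"
    using q_powr_antimono[of l "m + 3 * l"] m l one_minus_q2_pos by (intro divide_right_mono) auto
  finally show "mid \<le> q powr l / (1 - q\<^sup>2)" .
qed

lemma ent_a_bounds:
  assumes l: "1/2 \<le> l" and m: "-l \<le> m" "m \<le> l" "m = l \<or> m \<le> l - 1"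
  shows "\<bar>\<sigma>\<bar> \<le> 1 \<Longrightarrow> \<bar>ent_a q \<sigma> (l', m') (l, m)\<bar> \<le> 4 / (1 - q\<^sup>2)\<^sup>2"
    and "\<bar>ent_a q 1 (l', m') (l, m) - ent_a q (-1) (l', m') (l, m)\<bar> \<le> 4 / (1 - q\<^sup>2)\<^sup>2 * q powr l"
    and "ent_a q 1 (l', m') (l, m) \<noteq> ent_a q (-1) (l', m') (l, m) \<Longrightarrow> l' = l"
    and "ent_a q \<sigma> (l', m') (l, m) \<noteq> 0 \<Longrightarrow> \<bar>l' - l\<bar> \<le> 1 \<and> \<bar>m' - m\<bar> \<le> 1"
proof -
  define up where
    "up \<equiv> q powr (m - l - 1/2) * sqrt (qnum q (l + m + 1) * qnum q (l + m + 2)) / qnum q (2 * l + 2)"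
  define down where
    "down \<equiv> q powr (m + l + 1/2) * sqrt (qnum q (l - m - 1) * qnum q (l - m)) / qnum q (2 * l)"
  define mid where
    "mid \<equiv> q powr (m - 1/2) * sqrt (qnum q (l + m + 1) * qnum q (l - m))
             * (1 / qnum q (2 * l)) * (1 / qnum q (2 * l + 2))"
  note B = ent_a_summand_bounds[OF l m, folded up_def down_def mid_def]
  have ent: "ent_a q s (l', m') (l, m) = (if l' = l + 1 \<and> m' = m + 1 then up else 0)
      + (if l' = l - 1 \<and> m' = m + 1 then - down else 0)
      + (if l' = l \<and> m' = m + 1 then s * (1 + q\<^sup>2) * mid else 0)" for s
    unfolding ent_a_def up_def down_def mid_def by simp
  have K: "0 < 1 - q\<^sup>2" "1 - q\<^sup>2 \<le> 1" using one_minus_q2_pos by auto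
  have q2: "1 + q\<^sup>2 \<le> 2" using q_pos q_lt_1 by (simp add: power_le_one)
  have mid_le: "\<bar>s * (1 + q\<^sup>2) * mid\<bar> \<le> 2 * (q powr l / (1 - q\<^sup>2))" if "\<bar>s\<bar> \<le> 1" for s
  proof -
    have "\<bar>s * (1 + q\<^sup>2) * mid\<bar> = \<bar>s\<bar> * (1 + q\<^sup>2) * mid" using B(5) by (simp add: abs_mult)
    also have "\<dots> \<le> 1 * 2 * (q powr l / (1 - q\<^sup>2))" using that q2 B(5,6) by (intro mult_mono) auto
    finally show ?thesis by simp
  qed
  have "1 / (1 - q\<^sup>2) \<le> 1 / (1 - q\<^sup>2)\<^sup>2" and "q powr l / (1 - q\<^sup>2) \<le> 1 / (1 - q\<^sup>2)"
    using K q_powr_le_1[of l] l by (auto simp: power2_eq_square divide_simps)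
  moreover have "4 / (1 - q\<^sup>2)\<^sup>2 = 4 * (1 / (1 - q\<^sup>2)\<^sup>2)" by simp
  ultimately show "\<bar>ent_a q \<sigma> (l', m') (l, m)\<bar> \<le> 4 / (1 - q\<^sup>2)\<^sup>2" if "\<bar>\<sigma>\<bar> \<le> 1"
    unfolding ent using B mid_le[OF that] by auto
  have diff: "ent_a q 1 (l', m') (l, m) - ent_a q (-1) (l', m') (l, m)
      = (if l' = l \<and> m' = m + 1 then 2 * (1 + q\<^sup>2) * mid else 0)"
    unfolding ent by (auto simp: algebra_simps)
  have "\<bar>2 * (1 + q\<^sup>2) * mid\<bar> = 2 * \<bar>1 * (1 + q\<^sup>2) * mid\<bar>" by (simp add: abs_mult)
  also have "\<dots> \<le> 2 * (2 * (q powr l / (1 - q\<^sup>2)))" using mid_le[of 1] by simp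
  also have "\<dots> \<le> 4 / (1 - q\<^sup>2)\<^sup>2 * q powr l"
    using K q_pos by (simp add: divide_simps power2_eq_square mult_left_le)
  finally show "\<bar>ent_a q 1 (l', m') (l, m) - ent_a q (-1) (l', m') (l, m)\<bar> \<le> 4 / (1 - q\<^sup>2)\<^sup>2 * q powr l"
    unfolding diff by auto
  show "ent_a q 1 (l', m') (l, m) \<noteq> ent_a q (-1) (l', m') (l, m) \<Longrightarrow> l' = l"
    using diff by (auto split: if_splits)
  show "ent_a q \<sigma> (l', m') (l, m) \<noteq> 0 \<Longrightarrow> \<bar>l' - l\<bar> \<le> 1 \<and> \<bar>m' - m\<bar> \<le> 1"
    unfolding ent by (auto split: if_splits)
qed

lemma ent_b_summand_bounds:
  assumes l: "1/2 \<le> l" and m: "-l \<le> m" "m \<le> l"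
  defines "up \<equiv> q powr (m + 1) * sqrt (qnum q (l + m + 1) * qnum q (l - m + 1)) / qnum q (2 * l + 2)"
    and "down \<equiv> q powr (m + 1) * sqrt (qnum q (l + m) * qnum q (l - m)) / qnum q (2 * l)"
    and "mid \<equiv> (qnum q (l - m + 1) * qnum q (l + m) - q\<^sup>2 * qnum q (l - m) * qnum q (l + m + 1))
                / (qnum q (2 * l) * qnum q (2 * l + 2))"
  shows "0 \<le> up" "up \<le> 1 / (1 - q\<^sup>2)" "0 \<le> down" "down \<le> 1 / (1 - q\<^sup>2)"
    "\<bar>mid\<bar> \<le> 2 * (q powr l / (1 - q\<^sup>2)\<^sup>2)"
proof -
  have Q: "0 < qnum q (2*l)" "0 < qnum q (2*l+2)" using qnum_pos l by auto
  show "0 \<le> up" "0 \<le> down"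
    unfolding up_def down_def using Q qnum_nonneg m by (auto intro!: mult_nonneg_nonneg divide_nonneg_pos)
  have "up = q powr (m + 1) * sqrt (qnum q (l + m + 1) * qnum q (l - m + 1)) * (1 / qnum q (2 * l + 2)) * 1"
    unfolding up_def by simp
  also have "\<dots> \<le> q powr ((m + 1) + (1 - ((l + m + 1) + (l - m + 1)) / 2) + (2 * l + 2 - 1) + 0) / (1 - q\<^sup>2)"
    using sqrt_qnum_mult_le[of "l+m+1" "l-m+1"] qnum_nonneg[of "l+m+1"] qnum_nonneg[of "l-m+1"]
      inverse_qnum_le[of "2*l+2"] Q m l
    by (intro q_powr_mult_le) auto
  also have "\<dots> = q powr (m + l + 2) / (1 - q\<^sup>2)"
    by (rule arg_cong[where f="\<lambda>t. q powr t / (1 - q\<^sup>2)"]) (simp add: field_simps)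
  also have "\<dots> \<le> 1 / (1 - q\<^sup>2)"
    using q_powr_le_1[of "m + l + 2"] m one_minus_q2_pos by (intro divide_right_mono) auto
  finally show "up \<le> 1 / (1 - q\<^sup>2)" .
  have "down = q powr (m + 1) * sqrt (qnum q (l + m) * qnum q (l - m)) * (1 / qnum q (2 * l)) * 1"
    unfolding down_def by simp
  also have "\<dots> \<le> q powr ((m + 1) + (1 - ((l + m) + (l - m)) / 2) + (2 * l - 1) + 0) / (1 - q\<^sup>2)"
    using sqrt_qnum_mult_le[of "l+m" "l-m"] qnum_nonneg[of "l+m"] qnum_nonneg[of "l-m"]
      inverse_qnum_le[of "2*l"] Q m l
    by (intro q_powr_mult_le) auto
  also have "\<dots> = q powr (m + l + 1) / (1 - q\<^sup>2)"
    by (rule arg_cong[where f="\<lambda>t. q powr t / (1 - q\<^sup>2)"]) (simp add: field_simps)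
  also have "\<dots> \<le> 1 / (1 - q\<^sup>2)"
    using q_powr_le_1[of "m + l + 1"] m one_minus_q2_pos by (intro divide_right_mono) auto
  finally show "down \<le> 1 / (1 - q\<^sup>2)" .
  define P where "P = qnum q (l - m + 1) * qnum q (l + m)"
  define P' where "P' = qnum q (l - m) * qnum q (l + m + 1)"
  have P: "0 \<le> P" "P \<le> q powr (1 - 2*l) / (1 - q\<^sup>2)\<^sup>2"
    unfolding P_def using qnum_nonneg m qnum_mult_le[of "l - m + 1" "l + m"] by (auto simp: algebra_simps)
  have P': "0 \<le> P'" "P' \<le> q powr (1 - 2*l) / (1 - q\<^sup>2)\<^sup>2"
    unfolding P'_def using qnum_nonneg m qnum_mult_le[of "l - m" "l + m + 1"] by (auto simp: algebra_simps)
  have "0 \<le> q\<^sup>2 * P'" "q\<^sup>2 * P' \<le> P'"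
    using P'(1) q_pos q_lt_1 by (auto simp: mult_left_le_one_le power_le_one)
  then have num: "\<bar>P - q\<^sup>2 * P'\<bar> \<le> 2 * (q powr (1 - 2*l) / (1 - q\<^sup>2)\<^sup>2)"
    using P P' by linarith
  have "\<bar>mid\<bar> = \<bar>P - q\<^sup>2 * P'\<bar> * (1 / qnum q (2 * l)) * (1 / qnum q (2 * l + 2))"
    unfolding mid_def P_def P'_def using Q by (simp add: abs_divide abs_mult mult.assoc)
  also have "\<dots> \<le> (2 * (q powr (1 - 2*l) / (1 - q\<^sup>2)\<^sup>2)) * q powr (2 * l - 1) * q powr (2 * l + 2 - 1)"
    using num Q inverse_qnum_le[of "2*l"] inverse_qnum_le[of "2*l+2"] l
    by (intro mult_mono mult_nonneg_nonneg) auto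
  also have "\<dots> = 2 * (q powr ((1 - 2*l) + (2 * l - 1) + (2 * l + 2 - 1)) / (1 - q\<^sup>2)\<^sup>2)"
    unfolding powr_add by simp
  also have "\<dots> = 2 * (q powr (2 * l + 1) / (1 - q\<^sup>2)\<^sup>2)"
    by (rule arg_cong[where f="\<lambda>t. 2 * (q powr t / (1 - q\<^sup>2)\<^sup>2)"]) (simp add: field_simps)
  also have "\<dots> \<le> 2 * (q powr l / (1 - q\<^sup>2)\<^sup>2)"
    using q_powr_antimono[of l "2 * l + 1"] l by (intro mult_left_mono divide_right_mono) auto
  finally show "\<bar>mid\<bar> \<le> 2 * (q powr l / (1 - q\<^sup>2)\<^sup>2)" .
qed

lemma ent_b_bounds:
  assumes l: "1/2 \<le> l" and m: "-l \<le> m" "m \<le> l"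
  shows "\<bar>\<sigma>\<bar> \<le> 1 \<Longrightarrow> \<bar>ent_b q \<sigma> (l', m') (l, m)\<bar> \<le> 4 / (1 - q\<^sup>2)\<^sup>2"
    and "\<bar>ent_b q 1 (l', m') (l, m) - ent_b q (-1) (l', m') (l, m)\<bar> \<le> 4 / (1 - q\<^sup>2)\<^sup>2 * q powr l"
    and "ent_b q 1 (l', m') (l, m) \<noteq> ent_b q (-1) (l', m') (l, m) \<Longrightarrow> l' = l"
    and "ent_b q \<sigma> (l', m') (l, m) \<noteq> 0 \<Longrightarrow> \<bar>l' - l\<bar> \<le> 1 \<and> \<bar>m' - m\<bar> \<le> 1"
proof -
  define up where
    "up \<equiv> q powr (m + 1) * sqrt (qnum q (l + m + 1) * qnum q (l - m + 1)) / qnum q (2 * l + 2)"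
  define down where
    "down \<equiv> q powr (m + 1) * sqrt (qnum q (l + m) * qnum q (l - m)) / qnum q (2 * l)"
  define mid where "mid \<equiv> (qnum q (l - m + 1) * qnum q (l + m) - q\<^sup>2 * qnum q (l - m) * qnum q (l + m + 1))
                / (qnum q (2 * l) * qnum q (2 * l + 2))"
  note B = ent_b_summand_bounds[OF l m, folded up_def down_def mid_def]
  have ent: "ent_b q s (l', m') (l, m) = (if l' = l + 1 \<and> m' = m then - up else 0)
      + (if l' = l - 1 \<and> m' = m then - down else 0) + (if l' = l \<and> m' = m then s * mid else 0)" for s
    unfolding ent_b_def up_def down_def mid_def by simp
  have K: "0 < 1 - q\<^sup>2" "1 - q\<^sup>2 \<le> 1" using one_minus_q2_pos by auto
  have "1 / (1 - q\<^sup>2) \<le> 1 / (1 - q\<^sup>2)\<^sup>2" and "q powr l / (1 - q\<^sup>2)\<^sup>2 \<le> 1 / (1 - q\<^sup>2)\<^sup>2"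
    using K q_powr_le_1[of l] l by (auto simp: power2_eq_square divide_simps)
  moreover have "4 / (1 - q\<^sup>2)\<^sup>2 = 4 * (1 / (1 - q\<^sup>2)\<^sup>2)" by simp
  moreover have "\<bar>\<sigma> * mid\<bar> \<le> \<bar>mid\<bar>" if "\<bar>\<sigma>\<bar> \<le> 1"
    using that by (simp add: abs_mult mult_left_le_one_le)
  ultimately show "\<bar>ent_b q \<sigma> (l', m') (l, m)\<bar> \<le> 4 / (1 - q\<^sup>2)\<^sup>2" if "\<bar>\<sigma>\<bar> \<le> 1"
    unfolding ent using B that by auto
  have diff: "ent_b q 1 (l', m') (l, m) - ent_b q (-1) (l', m') (l, m)
      = (if l' = l \<and> m' = m then 2 * mid else 0)"
    unfolding ent by auto
  have "\<bar>2 * mid\<bar> \<le> 4 / (1 - q\<^sup>2)\<^sup>2 * q powr l" using B(5) by simp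
  then show "\<bar>ent_b q 1 (l', m') (l, m) - ent_b q (-1) (l', m') (l, m)\<bar> \<le> 4 / (1 - q\<^sup>2)\<^sup>2 * q powr l"
    unfolding diff by auto
  show "ent_b q 1 (l', m') (l, m) \<noteq> ent_b q (-1) (l', m') (l, m) \<Longrightarrow> l' = l"
    using diff by (auto split: if_splits)
  show "ent_b q \<sigma> (l', m') (l, m) \<noteq> 0 \<Longrightarrow> \<bar>l' - l\<bar> \<le> 1 \<and> \<bar>m' - m\<bar> \<le> 1"
    unfolding ent by (auto split: if_splits)
qed

end

definition lev :: "idx \<Rightarrow> real" where
  "lev i = fst (fst i)"

definition mag :: "idx \<Rightarrow> real" where
  "mag i = snd (fst i)"

definition levn :: "idx \<Rightarrow> nat" where
  "levn i = nat \<lfloor>lev i\<rfloor>"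

definition flip :: "idx \<Rightarrow> idx" where
  "flip i = (fst i, \<not> snd i)"

lemma fst_eq_lev_mag: "fst i = (lev i, mag i)"
  by (simp add: lev_def mag_def)

lemma flip_flip [simp]: "flip (flip i) = i"
  by (simp add: flip_def)

lemma lev_flip [simp]: "lev (flip i) = lev i"
  by (simp add: flip_def lev_def)

lemma mag_flip [simp]: "mag (flip i) = mag i"
  by (simp add: flip_def mag_def)

lemma snd_flip [simp]: "snd (flip i) = (\<not> snd i)"
  by (simp add: flip_def)

lemma fst_flip [simp]: "fst (flip i) = fst i"
  by (simp add: flip_def)

lemma flip_eq_iff [simp]: "flip i = flip j \<longleftrightarrow> i = j"
  by (metis flip_flip)

lemma inj_flip: "inj flip"
  by (rule injI) simp

lemma basis_idx_iff:
  "i \<in> basis_idx \<longleftrightarrow> (\<exists>n j. j \<le> 2 * n + 1 \<and> fst i = (real n + 1/2, real j - (real n + 1/2)))"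
  by (cases i) (auto simp: basis_idx_def)

lemma flip_in_basis_idx [simp]: "flip i \<in> basis_idx \<longleftrightarrow> i \<in> basis_idx"
  by (simp add: basis_idx_iff)

lemma basis_idx_bounds:
  assumes "i \<in> basis_idx"
  shows "1/2 \<le> lev i" "- lev i \<le> mag i" "mag i \<le> lev i" "mag i = lev i \<or> mag i \<le> lev i - 1"
    and "lev i = real (levn i) + 1/2"
proof -
  obtain n j where j: "j \<le> 2 * n + 1" and i: "fst i = (real n + 1/2, real j - (real n + 1/2))"
    using assms basis_idx_iff by blast
  then have l: "lev i = real n + 1/2" and m: "mag i = real j - (real n + 1/2)"
    by (auto simp: lev_def mag_def)
  show "1/2 \<le> lev i" "- lev i \<le> mag i" "mag i \<le> lev i"
    using l m j by auto
  show "mag i = lev i \<or> mag i \<le> lev i - 1"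
    using l m j by (cases "j = 2 * n + 1") auto
  have "\<lfloor>real n + 1/2\<rfloor> = int n" by linarith
  then show "lev i = real (levn i) + 1/2"
    using l by (simp add: levn_def)
qed

lemma basis_idx_diff_int:
  assumes "i \<in> basis_idx" "k \<in> basis_idx"
  shows "\<exists>a b. lev k = lev i + of_int a \<and> mag k = mag i + of_int b"
proof -
  obtain n j where i: "fst i = (real n + 1/2, real j - (real n + 1/2))"
    using assms basis_idx_iff by blast
  obtain n' j' where k: "fst k = (real n' + 1/2, real j' - (real n' + 1/2))"
    using assms basis_idx_iff by blast
  show ?thesis
    by (rule exI[of _ "int n' - int n"], rule exI[of _ "(int j' - int n') - (int j - int n)"])
       (use i k in \<open>auto simp: lev_def mag_def\<close>)
qed

definition band :: "nat \<Rightarrow> idx \<Rightarrow> idx set" where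
  "band N j = {k \<in> basis_idx. \<bar>lev k - lev j\<bar> \<le> real N \<and> \<bar>mag k - mag j\<bar> \<le> real N}"

lemma band_subset:
  assumes "j \<in> basis_idx"
  shows "band N j \<subseteq> (\<lambda>(a, b, e). ((lev j + of_int a, mag j + of_int b), e))
                       ` ({-int N..int N} \<times> {-int N..int N} \<times> UNIV)"
proof
  fix k assume k: "k \<in> band N j"
  then have kb: "k \<in> basis_idx" and d: "\<bar>lev k - lev j\<bar> \<le> real N" "\<bar>mag k - mag j\<bar> \<le> real N"
    by (auto simp: band_def)
  obtain a b where ab: "lev k = lev j + of_int a" "mag k = mag j + of_int b"
    using basis_idx_diff_int[OF assms kb] by blast
  have "(a, b, snd k) \<in> {-int N..int N} \<times> {-int N..int N} \<times> UNIV"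
    using d ab by auto
  moreover have "k = (\<lambda>(a, b, e). ((lev j + of_int a, mag j + of_int b), e)) (a, b, snd k)"
    using ab by (cases k) (auto simp: lev_def mag_def)
  ultimately show "k \<in> (\<lambda>(a, b, e). ((lev j + of_int a, mag j + of_int b), e))
                       ` ({-int N..int N} \<times> {-int N..int N} \<times> UNIV)"
    by blast
qed

lemma finite_band: "j \<in> basis_idx \<Longrightarrow> finite (band N j)"
  by (rule finite_subset[OF band_subset]) auto

lemma card_band_le:
  assumes "j \<in> basis_idx"
  shows "real (card (band N j)) \<le> 2 * (2 * real N + 1)\<^sup>2"
proof -
  let ?R = "{-int N..int N} \<times> {-int N..int N} \<times> (UNIV :: bool set)"
  have "card (band N j) \<le> card ((\<lambda>(a, b, e). ((lev j + of_int a, mag j + of_int b), e)) ` ?R)"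
    by (rule card_mono[OF _ band_subset[OF assms]]) auto
  also have "\<dots> \<le> card ?R"
    by (rule card_image_le) auto
  also have "\<dots> = (2 * N + 1) * (2 * N + 1) * 2"
  proof -
    have "nat (2 * int N + 1) = 2 * N + 1" by (simp add: nat_eq_iff)
    then show ?thesis by (simp add: card_cartesian_product)
  qed
  finally have "real (card (band N j)) \<le> real ((2 * N + 1) * (2 * N + 1) * 2)"
    by linarith
  then show ?thesis by (simp add: power2_eq_square algebra_simps)
qed

lemma band_flip_image: "band N (flip j) = flip ` band N j"
proof -
  have flip_band: "k \<in> band N (flip j) \<longleftrightarrow> flip k \<in> band N j" for k
    by (simp add: band_def)
  show ?thesis
  proof
    show "band N (flip j) \<subseteq> flip ` band N j"
      using flip_band by (metis flip_flip image_eqI subsetI)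
    show "flip ` band N j \<subseteq> band N (flip j)"
      by (auto simp: flip_band)
  qed
qed

lemma band_trans: "i \<in> band N1 k \<Longrightarrow> k \<in> band N2 j \<Longrightarrow> i \<in> band (N1 + N2) j"
  by (auto simp: band_def)

lemma band_mono: "N1 \<le> N2 \<Longrightarrow> i \<in> band N1 j \<Longrightarrow> i \<in> band N2 j"
  by (auto simp: band_def)

lemma band_self: "j \<in> basis_idx \<Longrightarrow> j \<in> band N j"
  by (simp add: band_def)

lemma band_1I: "i \<in> basis_idx \<Longrightarrow> \<bar>lev i - lev j\<bar> \<le> 1 \<and> \<bar>mag i - mag j\<bar> \<le> 1 \<Longrightarrow> i \<in> band 1 j"
  by (simp add: band_def)

section \<open>Finitary linear operators and their matrix entries\<close>

definition fin_supp :: "vec \<Rightarrow> bool" where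
  "fin_supp v \<longleftrightarrow> finite {i. v i \<noteq> 0}"

definition basis_vec :: "idx \<Rightarrow> vec" where
  "basis_vec j = (\<lambda>i. if i = j then 1 else 0)"

definition entry :: "op \<Rightarrow> idx \<Rightarrow> idx \<Rightarrow> complex" where
  "entry T i j = T (basis_vec j) i"

text \<open>Operators are arbitrary maps on vectors; the ones built by \<open>mop\<close> are determined by their
  matrix entries in the following sense.\<close>

definition fs_linear :: "op \<Rightarrow> bool" where
  "fs_linear T \<longleftrightarrow> (\<forall>v. fin_supp v \<longrightarrow> fin_supp (T v)) \<and>
     (\<forall>u v. fin_supp u \<longrightarrow> fin_supp v \<longrightarrow> T (\<lambda>i. u i + v i) = (\<lambda>i. T u i + T v i)) \<and>
     (\<forall>c v. fin_supp v \<longrightarrow> T (\<lambda>i. c * v i) = (\<lambda>i. c * T v i)) \<and>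
     (\<forall>v i. i \<notin> basis_idx \<longrightarrow> T v i = 0)"

lemma basis_vec_eq: "(\<lambda>j. if j = i then 1 else 0) = basis_vec i"
  by (simp add: basis_vec_def fun_eq_iff)

lemma fin_supp_basis_vec [simp]: "fin_supp (basis_vec j)"
  unfolding fin_supp_def basis_vec_def by simp

lemma fin_supp_zero [simp]: "fin_supp (\<lambda>i. 0)"
  unfolding fin_supp_def by simp

lemma fin_supp_add: "fin_supp u \<Longrightarrow> fin_supp v \<Longrightarrow> fin_supp (\<lambda>i. u i + v i)"
  unfolding fin_supp_def by (rule finite_subset[of _ "{i. u i \<noteq> 0} \<union> {i. v i \<noteq> 0}"]) auto

lemma fin_supp_cmult: "fin_supp v \<Longrightarrow> fin_supp (\<lambda>i. c * v i)"
  unfolding fin_supp_def by (rule finite_subset[of _ "{i. v i \<noteq> 0}"]) auto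

lemma fin_supp_sum:
  "finite A \<Longrightarrow> (\<And>k. k \<in> A \<Longrightarrow> fin_supp (f k)) \<Longrightarrow> fin_supp (\<lambda>i. \<Sum>k\<in>A. f k i)"
  by (induction A rule: finite_induct) (simp_all add: fin_supp_add)

lemma fs_linearD:
  assumes "fs_linear T"
  shows "fin_supp v \<Longrightarrow> fin_supp (T v)"
    and "fin_supp u \<Longrightarrow> fin_supp v \<Longrightarrow> T (\<lambda>i. u i + v i) = (\<lambda>i. T u i + T v i)"
    and "fin_supp v \<Longrightarrow> T (\<lambda>i. c * v i) = (\<lambda>i. c * T v i)"
    and "i \<notin> basis_idx \<Longrightarrow> T v i = 0"
  using assms unfolding fs_linear_def by blast+

lemma fs_linear_zero: "fs_linear T \<Longrightarrow> T (\<lambda>i. 0) = (\<lambda>i. 0)"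
  using fs_linearD(3)[of T "\<lambda>i. 0" 0] by simp

lemma fs_linear_sum:
  assumes T: "fs_linear T"
  shows "finite A \<Longrightarrow> (\<And>k. k \<in> A \<Longrightarrow> fin_supp (f k)) \<Longrightarrow>
    T (\<lambda>i. \<Sum>k\<in>A. f k i) = (\<lambda>i. \<Sum>k\<in>A. T (f k) i)"
proof (induction A rule: finite_induct)
  case empty
  then show ?case by (simp add: fs_linear_zero T)
next
  case (insert x F)
  have "T (\<lambda>i. \<Sum>k\<in>insert x F. f k i) = T (\<lambda>i. f x i + (\<Sum>k\<in>F. f k i))"
    using insert by simp
  also have "\<dots> = (\<lambda>i. T (f x) i + T (\<lambda>i. \<Sum>k\<in>F. f k i) i)"
    using insert by (intro fs_linearD(2)[OF T]) (auto intro: fin_supp_sum)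
  finally show ?case using insert by simp
qed

lemma vec_eq_sum_basis_vec:
  assumes "finite A" "{i. v i \<noteq> 0} \<subseteq> A"
  shows "v = (\<lambda>i. \<Sum>k\<in>A. v k * basis_vec k i)"
proof
  fix i
  show "v i = (\<Sum>k\<in>A. v k * basis_vec k i)"
  proof (cases "i \<in> A")
    case True
    then have "(\<Sum>k\<in>A. v k * basis_vec k i) = (\<Sum>k\<in>{i}. v k * basis_vec k i)"
      using assms by (intro sum.mono_neutral_right) (auto simp: basis_vec_def)
    then show ?thesis by (simp add: basis_vec_def)
  next
    case False
    then have "v i = 0" using assms(2) by auto
    moreover have "(\<Sum>k\<in>A. v k * basis_vec k i) = 0"
      using False by (intro sum.neutral) (auto simp: basis_vec_def)
    ultimately show ?thesis by simp
  qed
qed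

lemma fs_linear_apply:
  assumes T: "fs_linear T" and "finite A" "{i. v i \<noteq> 0} \<subseteq> A"
  shows "T v i = (\<Sum>k\<in>A. v k * entry T i k)"
proof -
  have "T v = T (\<lambda>i. \<Sum>k\<in>A. v k * basis_vec k i)"
    using vec_eq_sum_basis_vec[OF assms(2,3)] by (rule arg_cong)
  also have "\<dots> = (\<lambda>i. \<Sum>k\<in>A. T (\<lambda>i. v k * basis_vec k i) i)"
    using assms by (intro fs_linear_sum) (auto intro: fin_supp_cmult)
  also have "\<dots> = (\<lambda>i. \<Sum>k\<in>A. v k * entry T i k)"
    by (simp add: fs_linearD(3)[OF T] entry_def)
  finally show ?thesis by simp
qed

lemma fs_linear_comp:
  assumes S: "fs_linear S" and T: "fs_linear T"
  shows "fs_linear (S \<circ> T)"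
  unfolding fs_linear_def
proof (intro conjI allI impI)
  fix u v :: vec assume u: "fin_supp u" and v: "fin_supp v"
  show "(S \<circ> T) (\<lambda>i. u i + v i) = (\<lambda>i. (S \<circ> T) u i + (S \<circ> T) v i)"
    using fs_linearD(2)[OF T u v] fs_linearD(2)[OF S fs_linearD(1)[OF T u] fs_linearD(1)[OF T v]]
    by simp
next
  fix c and v :: vec assume v: "fin_supp v"
  show "(S \<circ> T) (\<lambda>i. c * v i) = (\<lambda>i. c * (S \<circ> T) v i)"
    using fs_linearD(3)[OF T v, of c] fs_linearD(3)[OF S fs_linearD(1)[OF T v], of c] by simp
qed (simp_all add: fs_linearD[OF S] fs_linearD(1)[OF T])

lemma fs_linear_add:
  assumes S: "fs_linear S" and T: "fs_linear T"
  shows "fs_linear (\<lambda>v i. S v i + T v i)"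
  unfolding fs_linear_def
proof (intro conjI allI impI)
  fix u v :: vec assume u: "fin_supp u" and v: "fin_supp v"
  show "(\<lambda>i. S (\<lambda>i. u i + v i) i + T (\<lambda>i. u i + v i) i) = (\<lambda>i. (S u i + T u i) + (S v i + T v i))"
    using fs_linearD(2)[OF T u v] fs_linearD(2)[OF S u v] by (simp add: algebra_simps)
next
  fix c and v :: vec assume v: "fin_supp v"
  show "(\<lambda>i. S (\<lambda>i. c * v i) i + T (\<lambda>i. c * v i) i) = (\<lambda>i. c * (S v i + T v i))"
    using fs_linearD(3)[OF T v, of c] fs_linearD(3)[OF S v, of c] by (simp add: algebra_simps)
qed (simp_all add: fs_linearD(1,4)[OF S] fs_linearD(1,4)[OF T] fin_supp_add)

lemma fs_linear_cmult:
  assumes T: "fs_linear T"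
  shows "fs_linear (\<lambda>v i. c * T v i)"
  unfolding fs_linear_def
proof (intro conjI allI impI)
  fix u v :: vec assume u: "fin_supp u" and v: "fin_supp v"
  show "(\<lambda>i. c * T (\<lambda>i. u i + v i) i) = (\<lambda>i. c * T u i + c * T v i)"
    using fs_linearD(2)[OF T u v] by (simp add: algebra_simps)
next
  fix d and v :: vec assume v: "fin_supp v"
  show "(\<lambda>i. c * T (\<lambda>i. d * v i) i) = (\<lambda>i. d * (c * T v i))"
    using fs_linearD(3)[OF T v, of d] by (simp add: algebra_simps)
qed (simp_all add: fs_linearD(1,4)[OF T] fin_supp_cmult)

lemma entry_outside: "fs_linear T \<Longrightarrow> i \<notin> basis_idx \<Longrightarrow> entry T i j = 0"
  by (simp add: entry_def fs_linearD(4))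

lemma entry_comp:
  assumes "fs_linear S" "fs_linear T" "finite A" "{k. entry T k j \<noteq> 0} \<subseteq> A"
  shows "entry (S \<circ> T) i j = (\<Sum>k\<in>A. entry T k j * entry S i k)"
proof -
  have "entry (S \<circ> T) i j = S (T (basis_vec j)) i" by (simp add: entry_def)
  also have "\<dots> = (\<Sum>k\<in>A. T (basis_vec j) k * entry S i k)"
    using assms by (intro fs_linear_apply) (auto simp: entry_def)
  finally show ?thesis by (simp add: entry_def)
qed

lemma entry_add: "entry (\<lambda>v i. S v i + T v i) i j = entry S i j + entry T i j"
  by (simp add: entry_def)

lemma entry_cmult: "entry (\<lambda>v i. c * T v i) i j = c * entry T i j"
  by (simp add: entry_def)

lemma mop_eq_sum:
  assumes "finite A" "{j. v j \<noteq> 0} \<subseteq> A"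
  shows "mop M v i = (if i \<in> basis_idx then (\<Sum>j\<in>A \<inter> basis_idx. M i j * v j) else 0)"
proof (cases "i \<in> basis_idx")
  case True
  have "(\<Sum>j\<in>{j\<in>basis_idx. v j \<noteq> 0}. M i j * v j) = (\<Sum>j\<in>A \<inter> basis_idx. M i j * v j)"
    using assms by (intro sum.mono_neutral_left) auto
  then show ?thesis using True by (simp add: mop_def)
qed (simp add: mop_def)

lemma fs_linear_mop:
  assumes fin: "\<And>j. finite {i. M i j \<noteq> 0}"
  shows "fs_linear (mop M)"
  unfolding fs_linear_def
proof (intro conjI allI impI)
  fix v assume v: "fin_supp v"
  have "{i. mop M v i \<noteq> 0} \<subseteq> (\<Union>j\<in>{j. v j \<noteq> 0}. {i. M i j \<noteq> 0})"
  proof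
    fix i assume "i \<in> {i. mop M v i \<noteq> 0}"
    then have "(\<Sum>j\<in>{j\<in>basis_idx. v j \<noteq> 0}. M i j * v j) \<noteq> 0"
      by (auto simp: mop_def split: if_splits)
    then obtain j where j: "j \<in> {j\<in>basis_idx. v j \<noteq> 0}" "M i j * v j \<noteq> 0"
      by (meson sum.neutral)
    have "j \<in> {j. v j \<noteq> 0}" "i \<in> {i. M i j \<noteq> 0}" using j by auto
    then show "i \<in> (\<Union>j\<in>{j. v j \<noteq> 0}. {i. M i j \<noteq> 0})" by (rule UN_I)
  qed
  then show "fin_supp (mop M v)"
    unfolding fin_supp_def by (rule finite_subset) (use v fin in \<open>auto simp: fin_supp_def\<close>)
next
  fix u v assume u: "fin_supp u" and v: "fin_supp v"
  let ?A = "{j. u j \<noteq> 0} \<union> {j. v j \<noteq> 0}"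
  have fA: "finite ?A" using u v by (auto simp: fin_supp_def)
  show "mop M (\<lambda>i. u i + v i) = (\<lambda>i. mop M u i + mop M v i)"
  proof
    fix i
    show "mop M (\<lambda>i. u i + v i) i = mop M u i + mop M v i"
      by (subst (1 2 3) mop_eq_sum[OF fA]) (auto simp: sum.distrib algebra_simps)
  qed
next
  fix c v assume v: "fin_supp v"
  have fA: "finite {j. v j \<noteq> 0}" using v by (simp add: fin_supp_def)
  show "mop M (\<lambda>i. c * v i) = (\<lambda>i. c * mop M v i)"
  proof
    fix i
    show "mop M (\<lambda>i. c * v i) i = c * mop M v i"
      by (subst (1 2) mop_eq_sum[OF fA]) (auto simp: sum_distrib_left algebra_simps)
  qed
next
  fix v i assume "i \<notin> basis_idx"
  then show "mop M v i = 0" by (simp add: mop_def)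
qed

lemma entry_mop: "j \<in> basis_idx \<Longrightarrow> entry (mop M) i j = (if i \<in> basis_idx then M i j else 0)"
proof -
  assume j: "j \<in> basis_idx"
  have "mop M (basis_vec j) i
      = (if i \<in> basis_idx then (\<Sum>k\<in>{j} \<inter> basis_idx. M i k * basis_vec j k) else 0)"
    by (rule mop_eq_sum) (auto simp: basis_vec_def)
  then show ?thesis using j by (simp add: entry_def basis_vec_def)
qed

lemma D_op_eq:
  "D_op v = (\<lambda>i. if i \<in> basis_idx then complex_of_real (lev i + 1/2) * v (flip i) else 0)"
  unfolding D_op_def lev_def flip_def by simp

lemma F_op_eq: "F_op v = (\<lambda>i. if i \<in> basis_idx then v (flip i) else 0)"
  unfolding F_op_def flip_def by simp

lemma fs_linear_D_op: "fs_linear D_op"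
  unfolding fs_linear_def D_op_eq
proof (intro conjI allI impI)
  fix v assume v: "fin_supp v"
  let ?Dv = "\<lambda>i. if i \<in> basis_idx then complex_of_real (lev i + 1/2) * v (flip i) else 0"
  have "{i. ?Dv i \<noteq> 0} \<subseteq> flip ` {i. v i \<noteq> 0}"
  proof
    fix i assume "i \<in> {i. ?Dv i \<noteq> 0}"
    then have "flip i \<in> {i. v i \<noteq> 0}" by (auto split: if_splits)
    then show "i \<in> flip ` {i. v i \<noteq> 0}" by (metis flip_flip image_eqI)
  qed
  moreover have "finite (flip ` {i. v i \<noteq> 0})"
    using v by (intro finite_imageI) (simp add: fin_supp_def)
  ultimately show "fin_supp ?Dv"
    unfolding fin_supp_def by (rule finite_subset)
qed (auto simp: algebra_simps)

lemma entry_D_op: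
  "entry D_op i j = (if i \<in> basis_idx \<and> flip i = j then complex_of_real (lev i + 1/2) else 0)"
  by (auto simp: entry_def D_op_eq basis_vec_def)

section \<open>Tame operators\<close>

text \<open>The last clause says that the blocks of \<open>T\<close> on the two copies of \<open>\<hat>H\<close>
  (on which \<open>\<pi>\<^sub>+\<close> and \<open>\<pi>\<^sub>-\<close> act) agree up to \<open>O(l\<^sup>k q\<^sup>l)\<close>;
  this is what makes graded traces converge for every \<open>s\<close>.\<close>

definition tame :: "real \<Rightarrow> nat \<Rightarrow> real \<Rightarrow> nat \<Rightarrow> op \<Rightarrow> bool" where
  "tame q N C k T \<longleftrightarrow> fs_linear T \<and> 0 \<le> C \<and>
     (\<forall>i\<in>basis_idx. \<forall>j\<in>basis_idx. entry T i j \<noteq> 0 \<longrightarrow> i \<in> band N j) \<and>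
     (\<forall>i\<in>basis_idx. \<forall>j\<in>basis_idx. cmod (entry T i j) \<le> C * (lev i + 1) ^ k) \<and>
     (\<forall>i\<in>basis_idx. \<forall>j\<in>basis_idx.
        cmod (entry T i j - entry T (flip i) (flip j)) \<le> C * (lev i + 1) ^ k * q powr lev i)"

lemma tameD:
  assumes "tame q N C k T"
  shows "fs_linear T" "0 \<le> C"
    and "i \<in> basis_idx \<Longrightarrow> j \<in> basis_idx \<Longrightarrow> entry T i j \<noteq> 0 \<Longrightarrow> i \<in> band N j"
    and "i \<in> basis_idx \<Longrightarrow> j \<in> basis_idx \<Longrightarrow> cmod (entry T i j) \<le> C * (lev i + 1) ^ k"
    and "i \<in> basis_idx \<Longrightarrow> j \<in> basis_idx \<Longrightarrow>
      cmod (entry T i j - entry T (flip i) (flip j)) \<le> C * (lev i + 1) ^ k * q powr lev i"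
  using assms unfolding tame_def by blast+

lemma tame_mono:
  assumes T: "tame q N C k T" and "N \<le> N'" "C \<le> C'" "k \<le> k'"
  shows "tame q N' C' k' T"
  unfolding tame_def
proof (intro conjI ballI impI)
  note t = tameD[OF T]
  show "fs_linear T" "0 \<le> C'"
    using t(1,2) assms(3) by auto
  fix i j assume i: "i \<in> basis_idx" and j: "j \<in> basis_idx"
  show "entry T i j \<noteq> 0 \<Longrightarrow> i \<in> band N' j"
    using t(3)[OF i j] band_mono[OF assms(2)] by blast
  have "(lev i + 1) ^ k \<le> (lev i + 1) ^ k'"
    using basis_idx_bounds(1)[OF i] assms(4) by (intro power_increasing) auto
  then have C': "C * (lev i + 1) ^ k \<le> C' * (lev i + 1) ^ k'"
    using t(2) assms(3) basis_idx_bounds(1)[OF i] by (intro mult_mono) auto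
  then show "cmod (entry T i j) \<le> C' * (lev i + 1) ^ k'"
    using t(4)[OF i j] by linarith
  have "C * (lev i + 1) ^ k * q powr lev i \<le> C' * (lev i + 1) ^ k' * q powr lev i"
    using C' by (intro mult_right_mono) auto
  then show "cmod (entry T i j - entry T (flip i) (flip j)) \<le> C' * (lev i + 1) ^ k' * q powr lev i"
    using t(5)[OF i j] by linarith
qed

lemma tame_add:
  assumes S: "tame q N C1 k S" and T: "tame q N C2 k T"
  shows "tame q N (C1 + C2) k (\<lambda>v i. S v i + T v i)"
  unfolding tame_def entry_add
proof (intro conjI ballI impI)
  note s = tameD[OF S] and t = tameD[OF T]
  show "fs_linear (\<lambda>v i. S v i + T v i)" "0 \<le> C1 + C2"
    using fs_linear_add s(1,2) t(1,2) by auto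
  fix i j assume i: "i \<in> basis_idx" and j: "j \<in> basis_idx"
  show "entry S i j + entry T i j \<noteq> 0 \<Longrightarrow> i \<in> band N j"
    using s(3)[OF i j] t(3)[OF i j] by (metis add_0)
  show "cmod (entry S i j + entry T i j) \<le> (C1 + C2) * (lev i + 1) ^ k"
    using s(4)[OF i j] t(4)[OF i j] norm_triangle_ineq[of "entry S i j" "entry T i j"]
    by (simp add: algebra_simps)
  have "cmod (entry S i j + entry T i j - (entry S (flip i) (flip j) + entry T (flip i) (flip j)))
     \<le> cmod (entry S i j - entry S (flip i) (flip j)) + cmod (entry T i j - entry T (flip i) (flip j))"
    by (rule order_trans[OF _ norm_triangle_ineq]) (simp add: algebra_simps)
  then show "cmod (entry S i j + entry T i j - (entry S (flip i) (flip j) + entry T (flip i) (flip j)))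
      \<le> (C1 + C2) * (lev i + 1) ^ k * q powr lev i"
    using s(5)[OF i j] t(5)[OF i j] by (simp add: algebra_simps)
qed

lemma tame_cmult:
  assumes T: "tame q N C k T"
  shows "tame q N (cmod c * C) k (\<lambda>v i. c * T v i)"
  unfolding tame_def entry_cmult
proof (intro conjI ballI impI)
  note t = tameD[OF T]
  show "fs_linear (\<lambda>v i. c * T v i)" "0 \<le> cmod c * C"
    using fs_linear_cmult t(1,2) by auto
  fix i j assume i: "i \<in> basis_idx" and j: "j \<in> basis_idx"
  show "c * entry T i j \<noteq> 0 \<Longrightarrow> i \<in> band N j"
    using t(3)[OF i j] by auto
  show "cmod (c * entry T i j) \<le> cmod c * C * (lev i + 1) ^ k"
    using t(4)[OF i j] by (simp add: norm_mult mult.assoc mult_left_mono)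
  have "cmod (c * entry T i j - c * entry T (flip i) (flip j))
      = cmod c * cmod (entry T i j - entry T (flip i) (flip j))"
    by (simp add: norm_mult[symmetric] algebra_simps)
  also have "\<dots> \<le> cmod c * (C * (lev i + 1) ^ k * q powr lev i)"
    using t(5)[OF i j] by (simp add: mult_left_mono)
  finally show "cmod (c * entry T i j - c * entry T (flip i) (flip j))
      \<le> cmod c * C * (lev i + 1) ^ k * q powr lev i"
    by (simp add: mult.assoc)
qed

lemma tame_id_op: "tame q 0 1 0 id_op"
proof -
  have id_entry: "entry id_op i j = (if i = j then 1 else 0)" if "i \<in> basis_idx" "j \<in> basis_idx" for i j
    using that by (simp add: id_op_def entry_mop)
  show ?thesis
    unfolding tame_def
  proof (intro conjI ballI impI)
    show "fs_linear id_op"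
      unfolding id_op_def by (rule fs_linear_mop) simp
    fix i j assume i: "i \<in> basis_idx" and j: "j \<in> basis_idx"
    show "entry id_op i j \<noteq> 0 \<Longrightarrow> i \<in> band 0 j"
      using id_entry[OF i j] band_self[OF j] by (auto split: if_splits)
    show "cmod (entry id_op i j) \<le> 1 * (lev i + 1) ^ 0"
      using id_entry[OF i j] by simp
    show "cmod (entry id_op i j - entry id_op (flip i) (flip j)) \<le> 1 * (lev i + 1) ^ 0 * q powr lev i"
      using id_entry[OF i j] id_entry[of "flip i" "flip j"] i j by simp
  qed simp
qed

lemma tame_D_op: "tame q 0 1 1 D_op"
  unfolding tame_def
proof (intro conjI ballI impI)
  fix i j assume i: "i \<in> basis_idx" and j: "j \<in> basis_idx"
  show "entry D_op i j \<noteq> 0 \<Longrightarrow> i \<in> band 0 j"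
    using i by (auto simp: entry_D_op band_def split: if_splits)
  have "\<bar>lev i + 1/2\<bar> \<le> lev i + 1"
    using basis_idx_bounds(1)[OF i] by simp
  then show "cmod (entry D_op i j) \<le> 1 * (lev i + 1) ^ 1"
    unfolding entry_D_op by (auto simp del: of_real_add of_real_divide)
  have swap: "(i = flip j) = (flip i = j)" by auto
  have "entry D_op (flip i) (flip j) = entry D_op i j"
    unfolding entry_D_op using i by (auto simp add: swap)
  then show "cmod (entry D_op i j - entry D_op (flip i) (flip j)) \<le> 1 * (lev i + 1) ^ 1 * q powr lev i"
    using basis_idx_bounds(1)[OF i] by simp
qed (simp_all add: fs_linear_D_op)

lemma norm_sum_le_card_mult:
  fixes f :: "'a \<Rightarrow> 'b::real_normed_vector"
  assumes "real (card A) \<le> B" "\<And>k. k \<in> A \<Longrightarrow> norm (f k) \<le> b" "0 \<le> b"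
  shows "norm (\<Sum>k\<in>A. f k) \<le> B * b"
proof -
  have "norm (\<Sum>k\<in>A. f k) \<le> (\<Sum>k\<in>A. norm (f k))"
    by (rule norm_sum)
  also have "\<dots> \<le> real (card A) * b"
    using assms(2) by (rule sum_bounded_above)
  also have "\<dots> \<le> B * b"
    using assms(1,3) by (rule mult_right_mono)
  finally show ?thesis .
qed

lemma entry_comp_band:
  assumes S: "fs_linear S" and T: "tame q N C k T" and j: "j \<in> basis_idx"
  shows "entry (S \<circ> T) i j = (\<Sum>l\<in>band N j. entry T l j * entry S i l)"
proof (rule entry_comp[OF S tameD(1)[OF T] finite_band[OF j]])
  show "{l. entry T l j \<noteq> 0} \<subseteq> band N j"
  proof
    fix l assume "l \<in> {l. entry T l j \<noteq> 0}"
    then have "entry T l j \<noteq> 0" by simp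
    moreover from this have "l \<in> basis_idx"
      using entry_outside[OF tameD(1)[OF T]] by blast
    ultimately show "l \<in> band N j"
      using tameD(3)[OF T _ j] by blast
  qed
qed

context q_param
begin

lemma lev_shift_bounds:
  assumes i: "i \<in> basis_idx" and l: "l \<in> basis_idx" and d: "\<bar>lev l - lev i\<bar> \<le> real N"
  shows "(lev l + 1) ^ p \<le> (real N + 1) ^ p * (lev i + 1) ^ p"
    and "q powr lev l \<le> q powr (- real N) * q powr lev i"
proof -
  have "0 \<le> lev i" "0 \<le> lev l" using basis_idx_bounds(1) i l by fastforce+
  then have "lev l + 1 \<le> (real N + 1) * (lev i + 1)"
    using d by (simp add: algebra_simps) (smt (verit) mult_nonneg_nonneg of_nat_0_le_iff)
  then have "(lev l + 1) ^ p \<le> ((real N + 1) * (lev i + 1)) ^ p"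
    using \<open>0 \<le> lev l\<close> by (intro power_mono) auto
  then show "(lev l + 1) ^ p \<le> (real N + 1) ^ p * (lev i + 1) ^ p"
    by (simp add: power_mult_distrib)
  have "q powr lev l \<le> q powr (- real N + lev i)"
    using d by (intro q_powr_antimono) auto
  then show "q powr lev l \<le> q powr (- real N) * q powr lev i"
    using powr_add[of q "- real N" "lev i"] by simp
qed

lemma tame_entry_shift_bounds:
  assumes T: "tame q N C k T" and i: "i \<in> basis_idx" and j: "j \<in> basis_idx" and l: "l \<in> basis_idx"
    and near: "\<bar>lev l - lev i\<bar> \<le> real M"
  defines "B \<equiv> C * ((real M + 1) ^ k * (lev i + 1) ^ k) * q powr (- real M)"
  shows "cmod (entry T l j) \<le> B" "cmod (entry T (flip l) (flip j)) \<le> B"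
    and "cmod (entry T l j - entry T (flip l) (flip j)) \<le> B * q powr lev i"
proof -
  note t = tameD[OF T]
  have "C * (lev l + 1) ^ k \<le> C * ((real M + 1) ^ k * (lev i + 1) ^ k)"
    using lev_shift_bounds(1)[OF i l near] t(2) by (rule mult_left_mono)
  also have "\<dots> \<le> B"
  proof -
    have "1 \<le> q powr (- real M)"
      using q_powr_antimono[of "- real M" 0] q_pos by simp
    then show ?thesis
      unfolding B_def using t(2) basis_idx_bounds(1)[OF i]
      by (simp add: mult_left_mono[of 1 "q powr (- real M)" "C * ((real M + 1) ^ k * (lev i + 1) ^ k)",
            simplified])
  qed
  finally have B: "C * (lev l + 1) ^ k \<le> B" .
  show "cmod (entry T l j) \<le> B" "cmod (entry T (flip l) (flip j)) \<le> B"
    using t(4)[OF l j] t(4)[of "flip l" "flip j"] l j B by auto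
  have "cmod (entry T l j - entry T (flip l) (flip j)) \<le> C * (lev l + 1) ^ k * q powr lev l"
    using t(5)[OF l j] .
  also have "\<dots> \<le> C * ((real M + 1) ^ k * (lev i + 1) ^ k) * (q powr (- real M) * q powr lev i)"
    using lev_shift_bounds[OF i l near] t(2) basis_idx_bounds(1)[OF i] basis_idx_bounds(1)[OF l]
    by (intro mult_mono mult_left_mono) auto
  finally show "cmod (entry T l j - entry T (flip l) (flip j)) \<le> B * q powr lev i"
    by (simp add: B_def mult.assoc)
qed

lemma tame_comp_summand_bounds:
  assumes S: "tame q N1 C1 k1 S" and T: "tame q N2 C2 k2 T"
    and i: "i \<in> basis_idx" and j: "j \<in> basis_idx" and l: "l \<in> basis_idx"
  defines "K \<equiv> C1 * C2 * (real N1 + 1) ^ k2 * q powr (- real N1)"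
  shows "cmod (entry T l j * entry S i l) \<le> K * (lev i + 1) ^ (k1 + k2)"
    and "cmod (entry T l j * entry S i l - entry T (flip l) (flip j) * entry S (flip i) (flip l))
      \<le> 2 * K * (lev i + 1) ^ (k1 + k2) * q powr lev i"
proof -
  note s = tameD[OF S]
  have K: "0 \<le> K" unfolding K_def using s(2) tameD(2)[OF T] by simp
  have "cmod (entry T l j * entry S i l) \<le> K * (lev i + 1) ^ (k1 + k2) \<and>
    cmod (entry T l j * entry S i l - entry T (flip l) (flip j) * entry S (flip i) (flip l))
      \<le> 2 * K * (lev i + 1) ^ (k1 + k2) * q powr lev i"
  proof (cases "entry S i l = 0 \<and> entry S (flip i) (flip l) = 0")
    case True
    then show ?thesis
      using K basis_idx_bounds(1)[OF i] by simp
  next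
    case False
    then have near: "\<bar>lev l - lev i\<bar> \<le> real N1"
      using s(3)[OF i l] s(3)[of "flip i" "flip l"] i l by (auto simp: band_def abs_minus_commute)
    define B where "B = C2 * ((real N1 + 1) ^ k2 * (lev i + 1) ^ k2) * q powr (- real N1)"
    note T_le = tame_entry_shift_bounds[OF T i j l near, folded B_def]
    have B0: "0 \<le> B"
      using T_le(1) by (meson norm_ge_zero order_trans)
    have KB: "K * (lev i + 1) ^ (k1 + k2) = B * (C1 * (lev i + 1) ^ k1)"
      by (simp add: K_def B_def power_add algebra_simps)
    have "cmod (entry T l j * entry S i l) \<le> B * (C1 * (lev i + 1) ^ k1)"
      unfolding norm_mult using T_le(1) s(4)[OF i l] B0 by (intro mult_mono) auto
    then have first: "cmod (entry T l j * entry S i l) \<le> K * (lev i + 1) ^ (k1 + k2)"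
      by (simp only: KB)
    have split: "entry T l j * entry S i l - entry T (flip l) (flip j) * entry S (flip i) (flip l)
      = entry S i l * (entry T l j - entry T (flip l) (flip j))
        + (entry S i l - entry S (flip i) (flip l)) * entry T (flip l) (flip j)"
      by (simp add: algebra_simps)
    have "cmod (entry T l j * entry S i l - entry T (flip l) (flip j) * entry S (flip i) (flip l))
      \<le> cmod (entry S i l) * cmod (entry T l j - entry T (flip l) (flip j))
        + cmod (entry S i l - entry S (flip i) (flip l)) * cmod (entry T (flip l) (flip j))"
      unfolding split by (rule order_trans[OF norm_triangle_ineq]) (simp add: norm_mult)
    also have "\<dots> \<le> (C1 * (lev i + 1) ^ k1) * (B * q powr lev i)
        + (C1 * (lev i + 1) ^ k1 * q powr lev i) * B"
      using s(2) s(4,5)[OF i l] T_le basis_idx_bounds(1)[OF i] by (intro add_mono mult_mono) auto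
    also have "\<dots> = 2 * K * (lev i + 1) ^ (k1 + k2) * q powr lev i"
      by (simp add: K_def B_def power_add algebra_simps)
    finally show ?thesis
      using first by blast
  qed
  then show "cmod (entry T l j * entry S i l) \<le> K * (lev i + 1) ^ (k1 + k2)"
    and "cmod (entry T l j * entry S i l - entry T (flip l) (flip j) * entry S (flip i) (flip l))
      \<le> 2 * K * (lev i + 1) ^ (k1 + k2) * q powr lev i"
    by (blast+)
qed

lemma tame_comp:
  assumes S: "tame q N1 C1 k1 S" and T: "tame q N2 C2 k2 T"
  shows "tame q (N1 + N2) (4 * (2 * real N2 + 1)\<^sup>2 * C1 * C2 * (real N1 + 1) ^ k2 * q powr (- real N1))
           (k1 + k2) (S \<circ> T)"
  unfolding tame_def
proof (intro conjI ballI impI)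
  note s = tameD[OF S] and t = tameD[OF T]
  define K where "K = C1 * C2 * (real N1 + 1) ^ k2 * q powr (- real N1)"
  have K: "0 \<le> K" unfolding K_def using s(2) t(2) by simp
  have const: "4 * (2 * real N2 + 1)\<^sup>2 * C1 * C2 * (real N1 + 1) ^ k2 * q powr (- real N1)
      = 2 * (2 * real N2 + 1)\<^sup>2 * (2 * K)"
    by (simp add: K_def)
  show "fs_linear (S \<circ> T)"
    by (rule fs_linear_comp[OF s(1) t(1)])
  show "0 \<le> 4 * (2 * real N2 + 1)\<^sup>2 * C1 * C2 * (real N1 + 1) ^ k2 * q powr (- real N1)"
    unfolding const using K by simp
  fix i j assume i: "i \<in> basis_idx" and j: "j \<in> basis_idx"
  note ST = entry_comp_band[OF s(1) T j]
  note bounds = tame_comp_summand_bounds[OF S T i j, folded K_def]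
  have L: "0 \<le> (lev i + 1) ^ (k1 + k2)" "0 \<le> q powr lev i"
    using basis_idx_bounds(1)[OF i] by auto
  show "entry (S \<circ> T) i j \<noteq> 0 \<Longrightarrow> i \<in> band (N1 + N2) j"
  proof -
    assume "entry (S \<circ> T) i j \<noteq> 0"
    then obtain l where l: "l \<in> band N2 j" "entry T l j * entry S i l \<noteq> 0"
      unfolding ST by (meson sum.neutral)
    moreover have "l \<in> basis_idx"
      using l(1) by (simp add: band_def)
    ultimately have "i \<in> band N1 l"
      using s(3)[OF i] by simp
    then show ?thesis using band_trans l(1) by blast
  qed
  have "cmod (entry (S \<circ> T) i j) \<le> 2 * (2 * real N2 + 1)\<^sup>2 * (K * (lev i + 1) ^ (k1 + k2))"
    unfolding ST
    by (rule norm_sum_le_card_mult[OF card_band_le[OF j]])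
       (use bounds(1) K L in \<open>auto simp: band_def\<close>)
  also have "\<dots> \<le> 2 * (2 * real N2 + 1)\<^sup>2 * (2 * K) * (lev i + 1) ^ (k1 + k2)"
    using K L by (simp add: mult_left_mono)
  finally show "cmod (entry (S \<circ> T) i j)
      \<le> 4 * (2 * real N2 + 1)\<^sup>2 * C1 * C2 * (real N1 + 1) ^ k2 * q powr (- real N1)
          * (lev i + 1) ^ (k1 + k2)"
    unfolding const .
  have "entry (S \<circ> T) (flip i) (flip j)
      = (\<Sum>l\<in>band N2 j. entry T (flip l) (flip j) * entry S (flip i) (flip l))"
    unfolding entry_comp_band[OF s(1) T flip_in_basis_idx[THEN iffD2, OF j]] band_flip_image
    by (subst sum.reindex) (auto intro: inj_on_subset[OF inj_flip])
  then have "cmod (entry (S \<circ> T) i j - entry (S \<circ> T) (flip i) (flip j))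
      = cmod (\<Sum>l\<in>band N2 j.
          entry T l j * entry S i l - entry T (flip l) (flip j) * entry S (flip i) (flip l))"
    unfolding ST by (simp add: sum_subtractf)
  also have "\<dots> \<le> 2 * (2 * real N2 + 1)\<^sup>2 * (2 * K * (lev i + 1) ^ (k1 + k2) * q powr lev i)"
    by (rule norm_sum_le_card_mult[OF card_band_le[OF j]])
       (use bounds(2) K L in \<open>auto simp: band_def\<close>)
  finally show "cmod (entry (S \<circ> T) i j - entry (S \<circ> T) (flip i) (flip j))
      \<le> 4 * (2 * real N2 + 1)\<^sup>2 * C1 * C2 * (real N1 + 1) ^ k2 * q powr (- real N1)
          * (lev i + 1) ^ (k1 + k2) * q powr lev i"
    unfolding const by (simp add: mult.assoc)
qed

lemma tame_commut:
  assumes S: "tame q N1 C1 k1 S" and T: "tame q N2 C2 k2 T"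
  shows "\<exists>N C. tame q N C (k1 + k2) (commut S T)"
proof -
  obtain X where X: "tame q (N1 + N2) X (k1 + k2) (S \<circ> T)"
    using tame_comp[OF S T] by blast
  obtain Y where "tame q (N2 + N1) Y (k2 + k1) (T \<circ> S)"
    using tame_comp[OF T S] by blast
  then have Y: "tame q (N1 + N2) Y (k1 + k2) (\<lambda>v i. (-1) * (T \<circ> S) v i)"
    using tame_cmult[of q "N2 + N1" Y "k2 + k1" "T \<circ> S" "-1"] by (simp add: add.commute)
  have "commut S T = (\<lambda>v i. (S \<circ> T) v i + (-1) * (T \<circ> S) v i)"
    by (simp add: commut_def fun_eq_iff)
  moreover have "tame q (N1 + N2) (max X Y + max X Y) (k1 + k2) \<dots>"
    by (intro tame_add tame_mono[OF X] tame_mono[OF Y]) auto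
  ultimately show ?thesis by auto
qed

lemma tame_mop:
  fixes E :: "real \<Rightarrow> idx \<Rightarrow> idx \<Rightarrow> real"
  defines "M \<equiv> \<lambda>i' i. if snd i' = snd i then complex_of_real (E (sgn_of (snd i)) i' i) else 0"
  assumes fin: "\<And>i. finite {i'. M i' i \<noteq> 0}"
    and flip: "\<And>\<sigma> i' i. E \<sigma> (flip i') (flip i) = E \<sigma> i' i"
    and near: "\<And>\<sigma> i' i. i' \<in> basis_idx \<Longrightarrow> i \<in> basis_idx \<Longrightarrow> \<bar>\<sigma>\<bar> \<le> 1 \<Longrightarrow> E \<sigma> i' i \<noteq> 0 \<Longrightarrow> i' \<in> band 1 i"
    and bound: "\<And>\<sigma> i' i. i' \<in> basis_idx \<Longrightarrow> i \<in> basis_idx \<Longrightarrow> \<bar>\<sigma>\<bar> \<le> 1 \<Longrightarrow> \<bar>E \<sigma> i' i\<bar> \<le> C"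
    and diff: "\<And>i' i. i' \<in> basis_idx \<Longrightarrow> i \<in> basis_idx \<Longrightarrow> \<bar>E 1 i' i - E (-1) i' i\<bar> \<le> C * q powr lev i'"
    and C: "0 \<le> C"
  shows "tame q 1 C 0 (mop M)"
  unfolding tame_def
proof (intro conjI ballI impI)
  show "fs_linear (mop M)" using fs_linear_mop fin by blast
  show "0 \<le> C" by (rule C)
  fix i j assume i: "i \<in> basis_idx" and j: "j \<in> basis_idx"
  have sgn: "\<bar>sgn_of e\<bar> \<le> 1" for e by (simp add: sgn_of_def)
  have Mij: "entry (mop M) i j = M i j" "entry (mop M) (flip i) (flip j) = M (flip i) (flip j)"
    using entry_mop[OF j] entry_mop[of "flip j"] i j by simp_all
  show "entry (mop M) i j \<noteq> 0 \<Longrightarrow> i \<in> band 1 j"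
  proof -
    assume "entry (mop M) i j \<noteq> 0"
    then have "M i j \<noteq> 0" using Mij by simp
    then show ?thesis unfolding M_def using near[OF i j sgn] by (auto split: if_splits)
  qed
  have "cmod (M i j) \<le> C" unfolding M_def using bound[OF i j sgn] C by auto
  then show "cmod (entry (mop M) i j) \<le> C * (lev i + 1) ^ 0" using Mij by simp
  show "cmod (entry (mop M) i j - entry (mop M) (flip i) (flip j)) \<le> C * (lev i + 1) ^ 0 * q powr lev i"
  proof (cases "snd i = snd j")
    case True
    have "cmod (M i j - M (flip i) (flip j)) = \<bar>E (sgn_of (snd j)) i j - E (sgn_of (\<not> snd j)) i j\<bar>"
      unfolding M_def using True flip by (simp flip: of_real_diff)
    also have "\<dots> = \<bar>E 1 i j - E (-1) i j\<bar>"
      by (cases "snd j") (auto simp: sgn_of_def abs_minus_commute)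
    also have "\<dots> \<le> C * q powr lev i" using diff[OF i j] .
    finally show ?thesis unfolding Mij by simp
  next
    case False
    then have "M i j = 0" "M (flip i) (flip j) = 0"
      unfolding M_def by auto
    then show ?thesis using Mij C by simp
  qed
qed

end

lemma ent_a_supp:
  "ent_a q \<sigma> p' p \<noteq> 0 \<Longrightarrow> p' \<in> {(fst p + 1, snd p + 1), (fst p - 1, snd p + 1), (fst p, snd p + 1)}"
  by (cases p; cases p') (auto simp: ent_a_def split: if_splits)

lemma ent_b_supp:
  "ent_b q \<sigma> p' p \<noteq> 0 \<Longrightarrow> p' \<in> {(fst p + 1, snd p), (fst p - 1, snd p), (fst p, snd p)}"
  by (cases p; cases p') (auto simp: ent_b_def split: if_splits)

lemma finite_fst_preimage: "finite P \<Longrightarrow> finite {i :: idx. fst i \<in> P}"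
proof -
  assume "finite P"
  moreover have "{i :: idx. fst i \<in> P} = P \<times> UNIV" by auto
  ultimately show ?thesis by simp
qed

context q_param
begin

lemma tame_pi_a: "tame q 1 (4 / (1 - q\<^sup>2)\<^sup>2) 0 (pi_a q)"
  unfolding pi_a_def
proof (rule tame_mop[where E = "\<lambda>\<sigma> i' i. ent_a q \<sigma> (fst i') (fst i)"])
  fix i :: idx
  let ?P = "{(lev i + 1, mag i + 1), (lev i - 1, mag i + 1), (lev i, mag i + 1)}"
  show "finite {i'. (if snd i' = snd i then complex_of_real (ent_a q (sgn_of (snd i)) (fst i') (fst i))
      else 0) \<noteq> 0}"
    by (rule finite_subset[OF _ finite_fst_preimage[of ?P]])
       (auto simp: fst_eq_lev_mag dest: ent_a_supp split: if_splits)
next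
  fix \<sigma> :: real and i' i :: idx assume i': "i' \<in> basis_idx" and i: "i \<in> basis_idx"
  note B = ent_a_bounds[OF basis_idx_bounds(1-4)[OF i], where l' = "lev i'" and m' = "mag i'",
      folded fst_eq_lev_mag]
  show "\<bar>\<sigma>\<bar> \<le> 1 \<Longrightarrow> ent_a q \<sigma> (fst i') (fst i) \<noteq> 0 \<Longrightarrow> i' \<in> band 1 i"
    using B(4)[of \<sigma>] i' by (intro band_1I) (auto simp: abs_minus_commute)
  show "\<bar>\<sigma>\<bar> \<le> 1 \<Longrightarrow> \<bar>ent_a q \<sigma> (fst i') (fst i)\<bar> \<le> 4 / (1 - q\<^sup>2)\<^sup>2"
    using B(1) by blast
  show "\<bar>ent_a q 1 (fst i') (fst i) - ent_a q (-1) (fst i') (fst i)\<bar> \<le> 4 / (1 - q\<^sup>2)\<^sup>2 * q powr lev i'"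
    using B(2,3) by (cases "ent_a q 1 (fst i') (fst i) = ent_a q (-1) (fst i') (fst i)") auto
qed (auto simp: fst_eq_lev_mag)

lemma tame_pi_as: "tame q 1 (4 / (1 - q\<^sup>2)\<^sup>2) 0 (pi_as q)"
  unfolding pi_as_def
proof (rule tame_mop[where E = "\<lambda>\<sigma> i' i. ent_a q \<sigma> (fst i) (fst i')"])
  fix i :: idx
  let ?P = "{(lev i - 1, mag i - 1), (lev i + 1, mag i - 1), (lev i, mag i - 1)}"
  show "finite {i'. (if snd i' = snd i then complex_of_real (ent_a q (sgn_of (snd i)) (fst i) (fst i'))
      else 0) \<noteq> 0}"
    by (rule finite_subset[OF _ finite_fst_preimage[of ?P]])
       (auto simp: fst_eq_lev_mag dest!: ent_a_supp split: if_splits)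
next
  fix \<sigma> :: real and i' i :: idx assume i': "i' \<in> basis_idx" and i: "i \<in> basis_idx"
  note B = ent_a_bounds[OF basis_idx_bounds(1-4)[OF i'], where l' = "lev i" and m' = "mag i",
      folded fst_eq_lev_mag]
  show "\<bar>\<sigma>\<bar> \<le> 1 \<Longrightarrow> ent_a q \<sigma> (fst i) (fst i') \<noteq> 0 \<Longrightarrow> i' \<in> band 1 i"
    using B(4)[of \<sigma>] i' by (intro band_1I) (auto simp: abs_minus_commute)
  show "\<bar>\<sigma>\<bar> \<le> 1 \<Longrightarrow> \<bar>ent_a q \<sigma> (fst i) (fst i')\<bar> \<le> 4 / (1 - q\<^sup>2)\<^sup>2"
    using B(1) by blast
  show "\<bar>ent_a q 1 (fst i) (fst i') - ent_a q (-1) (fst i) (fst i')\<bar> \<le> 4 / (1 - q\<^sup>2)\<^sup>2 * q powr lev i'"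
    using B(2) by simp
qed (auto simp: fst_eq_lev_mag)

lemma tame_pi_b: "tame q 1 (4 / (1 - q\<^sup>2)\<^sup>2) 0 (pi_b q)"
  unfolding pi_b_def
proof (rule tame_mop[where E = "\<lambda>\<sigma> i' i. ent_b q \<sigma> (fst i') (fst i)"])
  fix i :: idx
  let ?P = "{(lev i + 1, mag i), (lev i - 1, mag i), (lev i, mag i)}"
  show "finite {i'. (if snd i' = snd i then complex_of_real (ent_b q (sgn_of (snd i)) (fst i') (fst i))
      else 0) \<noteq> 0}"
    by (rule finite_subset[OF _ finite_fst_preimage[of ?P]])
       (auto simp: fst_eq_lev_mag dest: ent_b_supp split: if_splits)
next
  fix \<sigma> :: real and i' i :: idx assume i': "i' \<in> basis_idx" and i: "i \<in> basis_idx"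
  note B = ent_b_bounds[OF basis_idx_bounds(1-3)[OF i], where l' = "lev i'" and m' = "mag i'",
      folded fst_eq_lev_mag]
  show "\<bar>\<sigma>\<bar> \<le> 1 \<Longrightarrow> ent_b q \<sigma> (fst i') (fst i) \<noteq> 0 \<Longrightarrow> i' \<in> band 1 i"
    using B(4)[of \<sigma>] i' by (intro band_1I) (auto simp: abs_minus_commute)
  show "\<bar>\<sigma>\<bar> \<le> 1 \<Longrightarrow> \<bar>ent_b q \<sigma> (fst i') (fst i)\<bar> \<le> 4 / (1 - q\<^sup>2)\<^sup>2"
    using B(1) by blast
  show "\<bar>ent_b q 1 (fst i') (fst i) - ent_b q (-1) (fst i') (fst i)\<bar> \<le> 4 / (1 - q\<^sup>2)\<^sup>2 * q powr lev i'"
    using B(2,3) by (cases "ent_b q 1 (fst i') (fst i) = ent_b q (-1) (fst i') (fst i)") auto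
qed (auto simp: fst_eq_lev_mag)

lemma tame_pi_alg: "x \<in> pi_alg q \<Longrightarrow> \<exists>N C. tame q N C 0 x"
proof (induction x rule: pi_alg.induct)
  case unit
  then show ?case using tame_id_op by blast
next
  case gen_a
  then show ?case using tame_pi_a by blast
next
  case gen_as
  then show ?case using tame_pi_as by blast
next
  case gen_b
  then show ?case using tame_pi_b by blast
next
  case (add S T)
  then obtain N1 C1 N2 C2 where "tame q N1 C1 0 S" "tame q N2 C2 0 T" by blast
  then have "tame q (max N1 N2) (max C1 C2) 0 S" "tame q (max N1 N2) (max C1 C2) 0 T"
    by (auto elim!: tame_mono)
  then show ?case using tame_add by blast
next
  case (smult T c)
  then show ?case using tame_cmult by blast
next
  case (mult S T)
  then obtain N1 C1 N2 C2 where "tame q N1 C1 0 S" "tame q N2 C2 0 T" by blast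
  then show ?case using tame_comp[of N1 C1 0 S N2 C2 0 T] by (metis add_0)
qed

lemma tame_D_commutators:
  assumes "x0 \<in> pi_alg q" "x1 \<in> pi_alg q" "x2 \<in> pi_alg q"
  shows "\<exists>N C. tame q N C 2 (x0 \<circ> commut D_op x1 \<circ> commut D_op x2)"
proof -
  obtain N0 C0 N1 C1 N2 C2 where x: "tame q N0 C0 0 x0" "tame q N1 C1 0 x1" "tame q N2 C2 0 x2"
    using tame_pi_alg assms by meson
  obtain M1 D1 M2 D2 where c: "tame q M1 D1 1 (commut D_op x1)" "tame q M2 D2 1 (commut D_op x2)"
    using tame_commut[OF tame_D_op x(2)] tame_commut[OF tame_D_op x(3)] by auto
  show ?thesis
    using tame_comp[OF tame_comp[OF x(1) c(1)] c(2)] unfolding add_0 one_add_one by blast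
qed

end

section \<open>Graded traces\<close>

lemma entire_infsum_dominated:
  fixes f :: "'a \<Rightarrow> complex \<Rightarrow> complex"
  assumes hol: "\<And>x. x \<in> X \<Longrightarrow> f x holomorphic_on UNIV"
    and dom: "\<And>z. \<exists>r>0. \<exists>M. M summable_on X \<and> (\<forall>x\<in>X. \<forall>s\<in>cball z r. norm (f x s) \<le> M x)"
  shows "(\<lambda>s. \<Sum>\<^sub>\<infinity>x\<in>X. f x s) holomorphic_on UNIV"
proof -
  have "(\<lambda>s. \<Sum>\<^sub>\<infinity>x\<in>X. f x s) holomorphic_on ball z r"
    if "M summable_on X" "\<forall>x\<in>X. \<forall>s\<in>cball z r. norm (f x s) \<le> M x" for z r M
  proof -
    have "uniform_limit (cball z r) (\<lambda>Y s. \<Sum>x\<in>Y. f x s) (\<lambda>s. \<Sum>\<^sub>\<infinity>x\<in>X. f x s) (finite_subsets_at_top X)"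
      using that by (intro Weierstrass_m_test_general) auto
    moreover have "\<forall>\<^sub>F Y in finite_subsets_at_top X.
        continuous_on (cball z r) (\<lambda>s. \<Sum>x\<in>Y. f x s) \<and> (\<lambda>s. \<Sum>x\<in>Y. f x s) holomorphic_on ball z r"
    proof (rule eventually_finite_subsets_at_top_weakI)
      fix Y assume "finite Y" "Y \<subseteq> X"
      then have "(\<lambda>s. \<Sum>x\<in>Y. f x s) holomorphic_on UNIV"
        using hol by (intro holomorphic_on_sum) auto
      then show "continuous_on (cball z r) (\<lambda>s. \<Sum>x\<in>Y. f x s) \<and> (\<lambda>s. \<Sum>x\<in>Y. f x s) holomorphic_on ball z r"
        by (meson holomorphic_on_imp_continuous_on holomorphic_on_subset subset_UNIV)
    qed
    ultimately show ?thesis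
      by (elim holomorphic_uniform_limit) auto
  qed
  then have "(\<lambda>s. \<Sum>\<^sub>\<infinity>x\<in>X. f x s) analytic_on UNIV"
    unfolding analytic_on_def using dom by meson
  then show ?thesis by (rule analytic_imp_holomorphic)
qed

definition upper_idx :: "idx set" where
  "upper_idx = {i \<in> basis_idx. snd i}"

lemma upper_level_subset:
  "{i \<in> upper_idx. levn i = n} \<subseteq> (\<lambda>j. ((real n + 1/2, real j - (real n + 1/2)), True)) ` {0..2*n+1}"
proof
  fix i assume "i \<in> {i \<in> upper_idx. levn i = n}"
  then have i: "i \<in> basis_idx" "snd i" "levn i = n" by (auto simp: upper_idx_def)
  obtain n' j where j: "j \<le> 2*n'+1" "fst i = (real n' + 1/2, real j - (real n' + 1/2))"
    using i(1) basis_idx_iff by blast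
  have "n' = n" using j(2) basis_idx_bounds(5)[OF i(1)] i(3) by (simp add: lev_def)
  then show "i \<in> (\<lambda>j. ((real n + 1/2, real j - (real n + 1/2)), True)) ` {0..2*n+1}"
    using i(2) j by (intro image_eqI[of _ _ j]) (auto simp: prod_eq_iff)
qed

lemma card_upper_level_le: "real (card {i \<in> upper_idx. levn i = n}) \<le> 2 * real n + 2"
proof -
  have "card {i \<in> upper_idx. levn i = n} \<le> card {0..2*n+1}"
    using card_mono[OF _ upper_level_subset] card_image_le[of "{0..2*n+1}"]
    by (meson finite_atLeastAtMost le_trans finite_imageI)
  then show ?thesis by simp
qed

lemma summable_on_upper_idx_levelwise:
  fixes b :: "real \<Rightarrow> real"
  assumes b: "\<And>n. 0 \<le> b (real n + 1/2)"
    and summable: "summable (\<lambda>n. (2 * real n + 2) * b (real n + 1/2))"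
  shows "(\<lambda>i. b (lev i)) summable_on upper_idx"
proof -
  let ?b = "\<lambda>n. b (real n + 1/2)"
  have "(\<lambda>i. ?b (levn i)) summable_on upper_idx"
  proof (rule nonneg_bdd_above_summable_on)
    show "bdd_above (sum (\<lambda>i. ?b (levn i)) ` {F. F \<subseteq> upper_idx \<and> finite F})"
    proof (rule bdd_aboveI)
      fix y assume "y \<in> sum (\<lambda>i. ?b (levn i)) ` {F. F \<subseteq> upper_idx \<and> finite F}"
      then obtain F where F: "F \<subseteq> upper_idx" "finite F" and y: "y = (\<Sum>i\<in>F. ?b (levn i))" by auto
      have "y = (\<Sum>n\<in>levn ` F. real (card {i \<in> F. levn i = n}) * ?b n)"
        unfolding y by (subst sum.image_gen[OF F(2), where g=levn]) simp
      also have "\<dots> \<le> (\<Sum>n\<in>levn ` F. (2 * real n + 2) * ?b n)"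
      proof (intro sum_mono mult_right_mono b)
        fix n
        have "card {i \<in> F. levn i = n} \<le> card {i \<in> upper_idx. levn i = n}"
          using F finite_subset[OF upper_level_subset] by (intro card_mono) auto
        then show "real (card {i \<in> F. levn i = n}) \<le> 2 * real n + 2"
          using card_upper_level_le[of n] by linarith
      qed
      also have "\<dots> \<le> (\<Sum>n. (2 * real n + 2) * ?b n)"
        using summable F(2) b by (intro sum_le_suminf) auto
      finally show "y \<le> (\<Sum>n. (2 * real n + 2) * ?b n)" .
    qed
  qed (use b in simp)
  moreover have "?b (levn i) = b (lev i)" if "i \<in> upper_idx" for i
    using that basis_idx_bounds(5) by (simp add: upper_idx_def)
  ultimately show ?thesis by (rule summable_on_cong[THEN iffD1, rotated])
qed

lemma basis_idx_eq_upper_idx_Un: "basis_idx = upper_idx \<union> flip ` upper_idx"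
proof -
  have "i \<in> flip ` upper_idx" if "i \<in> basis_idx" "\<not> snd i" for i
    using that by (intro image_eqI[of _ _ "flip i"]) (auto simp: upper_idx_def)
  then show ?thesis by (auto simp: upper_idx_def)
qed

lemma upper_idx_Int_flip: "upper_idx \<inter> flip ` upper_idx = {}"
  by (auto simp: upper_idx_def)

lemma has_sum_graded:
  fixes h :: "idx \<Rightarrow> complex"
  assumes h: "h summable_on upper_idx" and h_flip: "(\<lambda>i. h (flip i)) summable_on upper_idx"
  shows "((\<lambda>i. sgn_of (snd i) * h i) has_sum (\<Sum>\<^sub>\<infinity>i\<in>upper_idx. h i - h (flip i))) basis_idx"
proof -
  have upper: "((\<lambda>i. sgn_of (snd i) * h i) has_sum (\<Sum>\<^sub>\<infinity>i\<in>upper_idx. h i)) upper_idx"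
    using h by (subst has_sum_cong[where g=h]) (auto simp: upper_idx_def sgn_of_def)
  have lower_neg: "((\<lambda>i. - h (flip i)) has_sum - (\<Sum>\<^sub>\<infinity>i\<in>upper_idx. h (flip i))) upper_idx"
    using h_flip by (simp add: has_sum_uminus)
  then have "((\<lambda>i. sgn_of (snd i) * h i) \<circ> flip has_sum - (\<Sum>\<^sub>\<infinity>i\<in>upper_idx. h (flip i))) upper_idx"
    by (subst has_sum_cong[where g="\<lambda>i. - h (flip i)"]) (auto simp: upper_idx_def sgn_of_def)
  then have lower: "((\<lambda>i. sgn_of (snd i) * h i) has_sum - (\<Sum>\<^sub>\<infinity>i\<in>upper_idx. h (flip i))) (flip ` upper_idx)"
    by (subst has_sum_reindex) (auto intro: inj_on_subset[OF inj_flip])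
  have "((\<lambda>i. h i - h (flip i)) has_sum (\<Sum>\<^sub>\<infinity>i\<in>upper_idx. h i) - (\<Sum>\<^sub>\<infinity>i\<in>upper_idx. h (flip i))) upper_idx"
    using has_sum_add[OF has_sum_infsum[OF h] lower_neg] by simp
  then show ?thesis
    using has_sum_Un_disjoint[OF upper lower upper_idx_Int_flip]
    by (simp add: basis_idx_eq_upper_idx_Un[symmetric] infsumI)
qed

definition absD_eig_powr :: "complex \<Rightarrow> idx \<Rightarrow> complex" where
  "absD_eig_powr s i = complex_of_real (lev i + 1/2) powr s"

lemma norm_absD_eig_powr: "i \<in> basis_idx \<Longrightarrow> cmod (absD_eig_powr s i) = (lev i + 1/2) powr Re s"
  unfolding absD_eig_powr_def using basis_idx_bounds(1)[of i] by (subst norm_powr_real_powr) auto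

lemma absD_eig_powr_flip [simp]: "absD_eig_powr s (flip i) = absD_eig_powr s i"
  by (simp add: absD_eig_powr_def)

lemma absD_eig_powr_0: "i \<in> basis_idx \<Longrightarrow> absD_eig_powr 0 i = 1"
proof -
  assume "i \<in> basis_idx"
  then have "complex_of_real (lev i + 1/2) \<noteq> 0"
    using basis_idx_bounds(1)[of i] by (simp only: of_real_eq_0_iff) simp
  then show ?thesis unfolding absD_eig_powr_def by simp
qed

lemma diag_ent_gamma_absD_pow:
  assumes T: "fs_linear T" and i: "i \<in> basis_idx"
  shows "diag_ent (gamma_op \<circ> T \<circ> absD_pow z) i = sgn_of (snd i) * (entry T i i * absD_eig_powr z i)"
proof -
  have "absD_pow z (basis_vec i) = (\<lambda>j. absD_eig_powr z i * basis_vec i j)"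
    using i by (auto simp: absD_pow_def basis_vec_def absD_eig_powr_def lev_def fun_eq_iff)
  moreover have "T (\<lambda>j. absD_eig_powr z i * basis_vec i j) = (\<lambda>j. absD_eig_powr z i * T (basis_vec i) j)"
    by (rule fs_linearD(3)[OF T fin_supp_basis_vec])
  ultimately show ?thesis
    using i unfolding diag_ent_def basis_vec_eq by (simp add: gamma_op_def entry_def mult.commute)
qed

lemma diag_ent_gamma_F_commut_F:
  assumes T: "fs_linear T" and i: "i \<in> basis_idx"
  shows "diag_ent (gamma_op \<circ> F_op \<circ> commut F_op T) i
    = sgn_of (snd i) * (entry T i i - entry T (flip i) (flip i))"
proof -
  have "flip k = i \<longleftrightarrow> k = flip i" for k by auto
  then have "F_op (basis_vec i) = basis_vec (flip i)"
    using i unfolding F_op_eq by (auto simp: basis_vec_def fun_eq_iff)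
  then have "F_op (commut F_op T (basis_vec i)) i = entry T i i - entry T (flip i) (flip i)"
    using i by (simp add: F_op_eq commut_def entry_def)
  then show ?thesis
    using i unfolding diag_ent_def basis_vec_eq by (simp add: gamma_op_def)
qed

context q_param
begin

lemma summable_on_upper_idx_q_decay:
  "(\<lambda>i. (lev i + 1) ^ p * q powr lev i) summable_on upper_idx"
proof (rule summable_on_upper_idx_levelwise)
  show "summable (\<lambda>n. (2 * real n + 2) * ((real n + 1/2 + 1) ^ p * q powr (real n + 1/2)))"
  proof (rule summable_comparison_test_bigo)
    show "summable (\<lambda>n. norm (1 / real n ^ 2))"
      using inverse_power_summable[of 2, where 'a=real] by (simp add: field_simps)
    show "(\<lambda>n. (2 * real n + 2) * ((real n + 1/2 + 1) ^ p * q powr (real n + 1/2))) \<in> O(\<lambda>n. 1 / real n ^ 2)"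
      using q_pos q_lt_1 by real_asymp
  qed
qed simp

lemma entire_upper_idx_dirichlet_sum:
  assumes C: "0 \<le> C" and d: "\<And>i. i \<in> upper_idx \<Longrightarrow> cmod (d i) \<le> C * (lev i + 1) ^ k * q powr lev i"
  shows "(\<lambda>s. \<Sum>\<^sub>\<infinity>i\<in>upper_idx. d i * absD_eig_powr (-2 * s) i) holomorphic_on UNIV"
proof (rule entire_infsum_dominated)
  show "(\<lambda>s. d i * absD_eig_powr (-2 * s) i) holomorphic_on UNIV" for i
    unfolding absD_eig_powr_def by (intro holomorphic_intros)
next
  fix z :: complex
  define R where "R = nat \<lceil>\<bar>Re z\<bar>\<rceil> + 1"
  define M where "M i = C * ((lev i + 1) ^ (k + 2 * R) * q powr lev i)" for i
  have "cmod (d i * absD_eig_powr (-2 * s) i) \<le> M i" if i: "i \<in> upper_idx" and s: "s \<in> cball z 1" for i s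
  proof -
    have ib: "i \<in> basis_idx" and l: "1/2 \<le> lev i" using i basis_idx_bounds(1) by (auto simp: upper_idx_def)
    have "\<bar>Re s - Re z\<bar> \<le> 1"
      using abs_Re_le_cmod[of "s - z"] s by (simp add: dist_norm norm_minus_commute)
    moreover have "\<bar>Re z\<bar> \<le> real (nat \<lceil>\<bar>Re z\<bar>\<rceil>)" by (rule real_nat_ceiling_ge)
    ultimately have "- 2 * Re s \<le> real (2 * R)" unfolding R_def by simp linarith
    then have "cmod (absD_eig_powr (-2 * s) i) \<le> (lev i + 1/2) powr real (2 * R)"
      using l norm_absD_eig_powr[OF ib] by (simp add: powr_mono)
    also have "\<dots> = (lev i + 1/2) ^ (2 * R)"
      using l by (subst powr_realpow) auto
    also have "\<dots> \<le> (lev i + 1) ^ (2 * R)"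
      using l by (intro power_mono) auto
    finally have e: "cmod (absD_eig_powr (-2 * s) i) \<le> (lev i + 1) ^ (2 * R)" .
    have "cmod (d i * absD_eig_powr (-2 * s) i)
        \<le> (C * (lev i + 1) ^ k * q powr lev i) * (lev i + 1) ^ (2 * R)"
      unfolding norm_mult using d[OF i] e l C by (intro mult_mono) auto
    then show ?thesis by (simp add: M_def power_add algebra_simps)
  qed
  moreover have "M summable_on upper_idx"
    unfolding M_def by (intro summable_on_cmult_right summable_on_upper_idx_q_decay)
  ultimately show "\<exists>r>0. \<exists>M. M summable_on upper_idx \<and>
      (\<forall>i\<in>upper_idx. \<forall>s\<in>cball z r. norm (d i * absD_eig_powr (-2 * s) i) \<le> M i)"
    by (intro exI[of _ 1] exI[of _ M]) auto
qed

end

definition supertrace_zeta :: "op \<Rightarrow> complex \<Rightarrow> complex" where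
  "supertrace_zeta T s =
     (\<Sum>\<^sub>\<infinity>i\<in>upper_idx. (entry T i i - entry T (flip i) (flip i)) * absD_eig_powr (-2 * s) i)"

context q_param
begin

lemma tame_supertrace_zeta_entire:
  assumes "tame q N C k T"
  shows "supertrace_zeta T holomorphic_on UNIV"
  unfolding supertrace_zeta_def
  using tameD(2,5)[OF assms] by (intro entire_upper_idx_dirichlet_sum) (auto simp: upper_idx_def)

lemma tame_has_sum_supertrace_zeta:
  assumes T: "tame q N C k T" and s: "real k + 2 < 2 * Re s"
  shows "((\<lambda>i. diag_ent (gamma_op \<circ> T \<circ> absD_pow (-2 * s)) i) has_sum supertrace_zeta T s) basis_idx"
proof -
  define h where "h i = entry T i i * absD_eig_powr (-2 * s) i" for i
  define M where "M x = C * (x + 1) ^ k * (x + 1/2) powr (-2 * Re s)" for x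
  have M: "(\<lambda>i. M (lev i)) summable_on upper_idx"
  proof (rule summable_on_upper_idx_levelwise)
    show "summable (\<lambda>n. (2 * real n + 2) * M (real n + 1/2))"
    proof (rule summable_comparison_test_bigo)
      show "summable (\<lambda>n. norm (real n powr (1 + real k - 2 * Re s)))"
        using s summable_real_powr_iff by simp
      show "(\<lambda>n. (2 * real n + 2) * M (real n + 1/2)) \<in> O(\<lambda>n. real n powr (1 + real k - 2 * Re s))"
        unfolding M_def by real_asymp
    qed
  qed (use tameD(2)[OF T] in \<open>simp add: M_def\<close>)
  have h_le: "cmod (h j) \<le> M (lev j)" if "j \<in> basis_idx" for j
  proof -
    have "cmod (h j) = cmod (entry T j j) * (lev j + 1/2) powr (-2 * Re s)"
      using norm_absD_eig_powr[OF that] by (simp add: h_def norm_mult)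
    also have "\<dots> \<le> M (lev j)"
      unfolding M_def using tameD(4)[OF T that that] by (intro mult_right_mono) auto
    finally show ?thesis .
  qed
  have "h summable_on upper_idx" "(\<lambda>i. h (flip i)) summable_on upper_idx"
    by (rule abs_summable_summable[OF Infinite_Sum.abs_summable_on_comparison_test'[OF M]],
        use h_le h_le[of "flip _"] in \<open>simp add: upper_idx_def\<close>)+
  then have "((\<lambda>i. sgn_of (snd i) * h i) has_sum (\<Sum>\<^sub>\<infinity>i\<in>upper_idx. h i - h (flip i))) basis_idx"
    by (rule has_sum_graded)
  moreover have "(\<Sum>\<^sub>\<infinity>i\<in>upper_idx. h i - h (flip i)) = supertrace_zeta T s"
    unfolding supertrace_zeta_def h_def by (simp add: left_diff_distrib)
  ultimately have "((\<lambda>i. sgn_of (snd i) * h i) has_sum supertrace_zeta T s) basis_idx"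
    by simp
  then show ?thesis
    by (rule has_sum_cong[THEN iffD1, rotated])
       (simp add: h_def diag_ent_gamma_absD_pow[OF tameD(1)[OF T]])
qed

lemma tame_has_sum_chern_character:
  assumes T: "tame q N C k T"
  shows "((\<lambda>i. diag_ent (gamma_op \<circ> F_op \<circ> commut F_op T) i) has_sum 2 * supertrace_zeta T 0) basis_idx"
proof -
  define d where "d i = entry T i i - entry T (flip i) (flip i)" for i
  have "(\<lambda>i. C * ((lev i + 1) ^ k * q powr lev i)) summable_on upper_idx"
    by (intro summable_on_cmult_right summable_on_upper_idx_q_decay)
  moreover have "cmod (d i) \<le> C * ((lev i + 1) ^ k * q powr lev i)" if "i \<in> upper_idx" for i
    using that tameD(5)[OF T, of i i] by (simp add: d_def upper_idx_def mult.assoc)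
  ultimately have d: "d summable_on upper_idx"
    by (rule abs_summable_summable[OF Infinite_Sum.abs_summable_on_comparison_test'])
  have d_flip: "d (flip i) = - d i" for i by (simp add: d_def)
  have zeta_0: "supertrace_zeta T 0 = (\<Sum>\<^sub>\<infinity>i\<in>upper_idx. d i)"
    unfolding supertrace_zeta_def d_def by (rule infsum_cong) (simp add: absD_eig_powr_0 upper_idx_def)
  have "(\<Sum>\<^sub>\<infinity>i\<in>upper_idx. d i - d (flip i)) = (\<Sum>\<^sub>\<infinity>i\<in>upper_idx. 2 * d i)"
    by (simp add: d_flip)
  also have "\<dots> = 2 * supertrace_zeta T 0"
    unfolding zeta_0 using d by (rule infsum_cmult_right)
  finally have "(\<Sum>\<^sub>\<infinity>i\<in>upper_idx. d i - d (flip i)) = 2 * supertrace_zeta T 0" .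
  moreover have "(\<lambda>i. d (flip i)) summable_on upper_idx"
    using d by (simp add: d_flip summable_on_uminus)
  ultimately have "((\<lambda>i. sgn_of (snd i) * d i) has_sum 2 * supertrace_zeta T 0) basis_idx"
    using has_sum_graded[OF d] by simp
  then show ?thesis
    by (rule has_sum_cong[THEN iffD1, rotated])
       (simp add: d_def diag_ent_gamma_F_commut_F[OF tameD(1)[OF T]])
qed

end

context q_param
begin

lemma phi0_eq_chern_character:
  assumes "x0 \<in> pi_alg q"
  shows "\<exists>g. g holomorphic_on UNIV
    \<and> (\<forall>s. 1 < Re s \<longrightarrow> ((\<lambda>i. diag_ent (gamma_op \<circ> x0 \<circ> absD_pow (-2 * s)) i) has_sum g s) basis_idx)
    \<and> residue (\<lambda>s. g s / s) 0 = g 0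
    \<and> ((\<lambda>i. diag_ent (gamma_op \<circ> F_op \<circ> commut F_op x0) i) has_sum (2 * g 0)) basis_idx"
proof -
  obtain N C where T: "tame q N C 0 x0"
    using tame_pi_alg assms by blast
  note entire = tame_supertrace_zeta_entire[OF T]
  have "residue (\<lambda>s. supertrace_zeta x0 s / s) 0 = supertrace_zeta x0 0"
    using residue_simple[OF open_UNIV UNIV_I entire, of 0] by simp
  moreover have "((\<lambda>i. diag_ent (gamma_op \<circ> x0 \<circ> absD_pow (-2 * s)) i) has_sum supertrace_zeta x0 s)
      basis_idx" if "1 < Re s" for s
    using that by (intro tame_has_sum_supertrace_zeta[OF T]) simp
  ultimately show ?thesis
    using entire tame_has_sum_chern_character[OF T] by blast
qed

lemma phi2_vanishes:
  assumes "x0 \<in> pi_alg q" "x1 \<in> pi_alg q" "x2 \<in> pi_alg q"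
  shows "\<exists>g (c :: real). g meromorphic_on UNIV
    \<and> (\<forall>s. c < Re s \<longrightarrow> ((\<lambda>i. diag_ent (gamma_op \<circ> x0 \<circ> commut D_op x1 \<circ> commut D_op x2
                            \<circ> absD_pow (-2 * (s + 1))) i) has_sum g s) basis_idx)
    \<and> residue g 0 = 0"
proof -
  obtain N C where T: "tame q N C 2 (x0 \<circ> commut D_op x1 \<circ> commut D_op x2)"
    using tame_D_commutators assms by blast
  define g where "g = supertrace_zeta (x0 \<circ> commut D_op x1 \<circ> commut D_op x2) \<circ> (\<lambda>s. s + 1)"
  have "g holomorphic_on UNIV"
    unfolding g_def using tame_supertrace_zeta_entire[OF T]
    by (intro holomorphic_on_compose holomorphic_intros) (auto intro: holomorphic_on_subset)
  then have "g meromorphic_on UNIV" and "residue g 0 = 0"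
    by (auto intro: analytic_on_imp_meromorphic_on residue_holo simp: analytic_on_open)
  moreover have "((\<lambda>i. diag_ent (gamma_op \<circ> x0 \<circ> commut D_op x1 \<circ> commut D_op x2
      \<circ> absD_pow (-2 * (s + 1))) i) has_sum g s) basis_idx" if "1 < Re s" for s
    using tame_has_sum_supertrace_zeta[OF T, of "s + 1"] that by (simp add: g_def comp_assoc)
  ultimately show ?thesis
    by blast
qed

end

theorem mainTheorem12:
  fixes q :: real
  assumes "0 < q" and "q < 1"
  shows
    "(\<forall>x0 \<in> pi_alg q. \<exists>g :: complex \<Rightarrow> complex.
        g holomorphic_on UNIV
      \<and> (\<forall>s. 1 < Re s \<longrightarrow>
           ((\<lambda>i. diag_ent (gamma_op \<circ> x0 \<circ> absD_pow (-2 * s)) i) has_sum g s) basis_idx)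
      \<and> residue (\<lambda>s. g s / s) 0 = g 0
      \<and> ((\<lambda>i. diag_ent (gamma_op \<circ> F_op \<circ> commut F_op x0) i) has_sum (2 * g 0)) basis_idx)
   \<and> (\<forall>x0 \<in> pi_alg q. \<forall>x1 \<in> pi_alg q. \<forall>x2 \<in> pi_alg q.
       \<exists>(g :: complex \<Rightarrow> complex) (c :: real).
        g meromorphic_on UNIV
      \<and> (\<forall>s. c < Re s \<longrightarrow>
           ((\<lambda>i. diag_ent (gamma_op \<circ> x0 \<circ> commut D_op x1 \<circ> commut D_op x2
                            \<circ> absD_pow (-2 * (s + 1))) i) has_sum g s) basis_idx)
      \<and> residue g 0 = 0)"
proof -
  interpret q_param q
    using assms by unfold_locales
  show ?thesis
    using phi0_eq_chern_character phi2_vanishes by blast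
qed

end
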